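(* Let $\theta$ be a character of $Z$ trivial on $Z\cap\mathcal{K}_1$, and let $r\in\mathbb{Z}_{\ge0}$. Then $$\dim\big(\tau_{\mathcal{N}_1}(\theta)^{\mathcal{K}_{2r+1}}\big)=q(q^{2r}-1),\qquad \dim\big(\tau_{\mathcal{N}_\varpi}(\theta)^{\mathcal{K}_{2r+1}}\big)=q^{2r}-1,$$ where $V^{\mathcal{K}_{2r+1}}$ denotes the subspace of $\mathcal{K}_{2r+1}$-fixed vectors.
   Context: Let $F$ be a non-archimedean local field with odd residual characteristic, ring of integers $\mathcal{O}_F$, maximal ideal $\mathfrak{p}_F$, uniformizer $\varpi$, residue field of cardinality $q$. Fix a non-square $\epsilon\in\mathcal{O}_F^\times$, $E=F[\sqrt\epsilon]$ with ring of integers $\mathcal{O}_E$, maximal ideal $\mathfrak{p}_E$; $\overline{x}$ is Galois conjugation. $G=\{g\in\mathrm{GL}_2(E):\overline{g}^{\top}\mathrm{w}g=\mathrm{w}\}$, $\mathrm{w}=\begin{pmatrix}0&1\\1&0\end{pmatrix}$; $\mathcal{K}=G\cap M_2(\mathcal{O}_E)$, $\mathcal{K}_n=\{g\in\mathcal{K}:g\equiv I\bmod\mathfrak{p}_E^n\}$; $Z$ the scalar matrices in $G$; $\mathcal{U}=\{\begin{pmatrix}1&\sqrt\epsilon b\\0&1\end{pmatrix}:b\in\mathcal{O}_F\}$. Fix an additive character $\psi'$ of $F$ trivial on $\mathfrak{p}_F$, nontrivial on $\mathcal{O}_F$; $\psi(x)=\psi'((x+\overline x)/2)$. For $d\ge1$,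 $\mathcal{J}_d$ is the set of $g\in G$ with $g_{11}-1,g_{22}-1,g_{12}\in\mathfrak{p}_E^{\lceil d/2\rceil}$ and $g_{21}\in\mathfrak{p}_E^{\lceil(d+1)/2\rceil}$; $X_{\varpi^{-d}}=\begin{pmatrix}0&\varpi^{-d}\sqrt\epsilon\\0&0\end{pmatrix}$; $\Psi(g)=\psi(\mathrm{Tr}(X_{\varpi^{-d}}(g-I)))$ is a character of $\mathcal{J}_d$; $\Psi_\theta$ is the character of $Z\mathcal{U}\mathcal{J}_d$ equal to $\theta$ on $Z$, trivial on $\mathcal{U}$, and $\Psi$ on $\mathcal{J}_d$; $\mathcal{S}_d(X_{\varpi^{-d}},\theta)=\mathrm{Ind}_{Z\mathcal{U}\mathcal{J}_d}^{\mathcal{K}}\Psi_\theta$, an irreducible representation of $\mathcal{K}$ of degree $(q^2-1)q^{d-1}$ on which $\mathcal{K}_{d+1}$ but not $\mathcal{K}_d$ acts trivially. $\tau_{\mathcal{N}_1}(\theta)=\bigoplus_{d\in2\mathbb{Z}_{>0}}\mathcal{S}_d(X_{\varpi^{-d}},\theta)$ and $\tau_{\mathcal{N}_\varpi}(\theta)=\bigoplus_{d\in2\mathbb{Z}_{\ge0}+1}\mathcal{S}_d(X_{\varpi^{-d}},\theta)$. *)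

theory Defs
  imports "HOL-Analysis.Analysis" "HOL-Library.Function_Algebras"
begin

text \<open>A discrete valuation on a field is encoded by v :: 'f => int, meaningful on
nonzero elements only (v 0 plays the role of +infinity and is never used).\<close>

definition pF :: "('f::field \<Rightarrow> int) \<Rightarrow> int \<Rightarrow> 'f set" where
  "pF v n = {x. x = 0 \<or> v x \<ge> n}"

definition OF :: "('f::field \<Rightarrow> int) \<Rightarrow> 'f set" where
  "OF v = pF v 0"

definition residue_card :: "('f::field \<Rightarrow> int) \<Rightarrow> nat" where
  "residue_card v = card ((\<lambda>x. {y \<in> OF v. y - x \<in> pF v 1}) ` OF v)"

definition nonarch_local_field :: "('f::field \<Rightarrow> int) \<Rightarrow> bool" where
  "nonarch_local_field v \<longleftrightarrow>
     (\<forall>x y. x \<noteq> 0 \<longrightarrow> y \<noteq> 0 \<longrightarrow> v (x * y) = v x + v y) \<and>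
     (\<forall>x y. x \<noteq> 0 \<longrightarrow> y \<noteq> 0 \<longrightarrow> x + y \<noteq> 0 \<longrightarrow> v (x + y) \<ge> min (v x) (v y)) \<and>
     (\<forall>n. \<exists>x. x \<noteq> 0 \<and> v x = n) \<and>
     \<comment> \<open>completeness w.r.t. the valuation metric\<close>
     (\<forall>s :: nat \<Rightarrow> 'f. (\<forall>n. \<exists>N. \<forall>m\<ge>N. \<forall>k\<ge>N. s m - s k \<in> pF v n) \<longrightarrow>
         (\<exists>L. \<forall>n. \<exists>N. \<forall>m\<ge>N. s m - L \<in> pF v n)) \<and>
     \<comment> \<open>finite residue field\<close>
     finite ((\<lambda>x. {y \<in> OF v. y - x \<in> pF v 1}) ` OF v)"

text \<open>Odd residual characteristic: 2 is a unit of the ring of integers.\<close>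
definition odd_residual_char :: "('f::field \<Rightarrow> int) \<Rightarrow> bool" where
  "odd_residual_char v \<longleftrightarrow> (2::'f) \<noteq> 0 \<and> v 2 = 0"

section \<open>The quadratic extension E = F[sqrt eps], elements (a,b) = a + b sqrt eps\<close>

definition eadd :: "'f::field \<times> 'f \<Rightarrow> 'f \<times> 'f \<Rightarrow> 'f \<times> 'f" where
  "eadd z w = (fst z + fst w, snd z + snd w)"

definition esub :: "'f::field \<times> 'f \<Rightarrow> 'f \<times> 'f \<Rightarrow> 'f \<times> 'f" where
  "esub z w = (fst z - fst w, snd z - snd w)"

definition emul :: "'f::field \<Rightarrow> 'f \<times> 'f \<Rightarrow> 'f \<times> 'f \<Rightarrow> 'f \<times> 'f" where
  "emul eps z w = (fst z * fst w + eps * snd z * snd w, fst z * snd w + snd z * fst w)"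

definition econj :: "'f::field \<times> 'f \<Rightarrow> 'f \<times> 'f" where
  "econj z = (fst z, - snd z)"

definition e0 :: "'f::field \<times> 'f" where "e0 = (0, 0)"
definition e1 :: "'f::field \<times> 'f" where "e1 = (1, 0)"
definition esqrt :: "'f::field \<times> 'f" where "esqrt = (0, 1)"
definition emb :: "'f::field \<Rightarrow> 'f \<times> 'f" where "emb x = (x, 0)"

text \<open>Since eps is a non-square unit and the
residual characteristic is odd, E/F is unramified, O_E = O_F + O_F sqrt eps and
varpi is a uniformizer of E, so p_E^n = p_F^n + p_F^n sqrt eps.\<close>
definition pE :: "('f::field \<Rightarrow> int) \<Rightarrow> int \<Rightarrow> ('f \<times> 'f) set" where
  "pE v n = {z. fst z \<in> pF v n \<and> snd z \<in> pF v n}"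

definition OE :: "('f::field \<Rightarrow> int) \<Rightarrow> ('f \<times> 'f) set" where
  "OE v = pE v 0"

datatype 'a m2 = M2 (m11: 'a) (m12: 'a) (m21: 'a) (m22: 'a)

definition mmul :: "'f::field \<Rightarrow> ('f \<times> 'f) m2 \<Rightarrow> ('f \<times> 'f) m2 \<Rightarrow> ('f \<times> 'f) m2" where
  "mmul eps g h = M2
     (eadd (emul eps (m11 g) (m11 h)) (emul eps (m12 g) (m21 h)))
     (eadd (emul eps (m11 g) (m12 h)) (emul eps (m12 g) (m22 h)))
     (eadd (emul eps (m21 g) (m11 h)) (emul eps (m22 g) (m21 h)))
     (eadd (emul eps (m21 g) (m12 h)) (emul eps (m22 g) (m22 h)))"

definition msub :: "('f::field \<times> 'f) m2 \<Rightarrow> ('f \<times> 'f) m2 \<Rightarrow> ('f \<times> 'f) m2" where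
  "msub g h = M2 (esub (m11 g) (m11 h)) (esub (m12 g) (m12 h))
                 (esub (m21 g) (m21 h)) (esub (m22 g) (m22 h))"

definition mI :: "('f::field \<times> 'f) m2" where "mI = M2 e1 e0 e0 e1"
definition mw :: "('f::field \<times> 'f) m2" where "mw = M2 e0 e1 e1 e0"

definition mct :: "('f::field \<times> 'f) m2 \<Rightarrow> ('f \<times> 'f) m2" where
  "mct g = M2 (econj (m11 g)) (econj (m21 g)) (econj (m12 g)) (econj (m22 g))"

definition mdet :: "'f::field \<Rightarrow> ('f \<times> 'f) m2 \<Rightarrow> 'f \<times> 'f" where
  "mdet eps g = esub (emul eps (m11 g) (m22 g)) (emul eps (m12 g) (m21 g))"

definition mtrace :: "('f::field \<times> 'f) m2 \<Rightarrow> 'f \<times> 'f" where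
  "mtrace g = eadd (m11 g) (m22 g)"

definition Ggrp :: "'f::field \<Rightarrow> ('f \<times> 'f) m2 set" where
  "Ggrp eps = {g. mdet eps g \<noteq> e0 \<and> mmul eps (mct g) (mmul eps mw g) = mw}"

definition Kgrp :: "'f::field \<Rightarrow> ('f \<Rightarrow> int) \<Rightarrow> ('f \<times> 'f) m2 set" where
  "Kgrp eps v = {g \<in> Ggrp eps. m11 g \<in> OE v \<and> m12 g \<in> OE v \<and> m21 g \<in> OE v \<and> m22 g \<in> OE v}"

definition Kn :: "'f::field \<Rightarrow> ('f \<Rightarrow> int) \<Rightarrow> nat \<Rightarrow> ('f \<times> 'f) m2 set" where
  "Kn eps v n = {g \<in> Kgrp eps v. let h = msub g mI in
      m11 h \<in> pE v (int n) \<and> m12 h \<in> pE v (int n) \<and> m21 h \<in> pE v (int n) \<and> m22 h \<in> pE v (int n)}"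

definition Zgrp :: "'f::field \<Rightarrow> ('f \<times> 'f) m2 set" where
  "Zgrp eps = {g \<in> Ggrp eps. \<exists>z. g = M2 z e0 e0 z}"

definition Ugrp :: "'f::field \<Rightarrow> ('f \<Rightarrow> int) \<Rightarrow> ('f \<times> 'f) m2 set" where
  "Ugrp eps v = {M2 e1 (emul eps esqrt (emb b)) e0 e1 | b. b \<in> OF v}"

text \<open>J_d; note ceil(d/2) = (d+1) div 2 and ceil((d+1)/2) = (d+2) div 2.\<close>
definition Jgrp :: "'f::field \<Rightarrow> ('f \<Rightarrow> int) \<Rightarrow> nat \<Rightarrow> ('f \<times> 'f) m2 set" where
  "Jgrp eps v d = {g \<in> Ggrp eps.
      esub (m11 g) e1 \<in> pE v (int ((d + 1) div 2)) \<and>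
      esub (m22 g) e1 \<in> pE v (int ((d + 1) div 2)) \<and>
      m12 g \<in> pE v (int ((d + 1) div 2)) \<and>
      m21 g \<in> pE v (int ((d + 2) div 2))}"

text \<open>psi(x) = psi'((x + conj x)/2); note (x + conj x)/2 lies in F.\<close>
definition psiE :: "('f::field \<Rightarrow> complex) \<Rightarrow> 'f \<times> 'f \<Rightarrow> complex" where
  "psiE psi' z = psi' (fst (eadd z (econj z)) / 2)"

definition Xmat :: "'f::field \<Rightarrow> 'f \<Rightarrow> nat \<Rightarrow> ('f \<times> 'f) m2" where
  "Xmat eps varpi d = M2 e0 (emul eps (emb (inverse varpi ^ d)) esqrt) e0 e0"

definition PsiJ :: "'f::field \<Rightarrow> 'f \<Rightarrow> ('f \<Rightarrow> complex) \<Rightarrow> nat \<Rightarrow> ('f \<times> 'f) m2 \<Rightarrow> complex" where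
  "PsiJ eps varpi psi' d g = psiE psi' (mtrace (mmul eps (Xmat eps varpi d) (msub g mI)))"

definition ZUJ :: "'f::field \<Rightarrow> ('f \<Rightarrow> int) \<Rightarrow> nat \<Rightarrow> ('f \<times> 'f) m2 set" where
  "ZUJ eps v d = {mmul eps z (mmul eps u j) | z u j.
      z \<in> Zgrp eps \<and> u \<in> Ugrp eps v \<and> j \<in> Jgrp eps v d}"

text \<open>Psi_theta: theta on Z, trivial on U, Psi on J_d (well defined on Z U J_d).\<close>
definition PsiTheta :: "'f::field \<Rightarrow> ('f \<Rightarrow> int) \<Rightarrow> 'f \<Rightarrow> ('f \<Rightarrow> complex) \<Rightarrow>
    (('f \<times> 'f) m2 \<Rightarrow> complex) \<Rightarrow> nat \<Rightarrow> ('f \<times> 'f) m2 \<Rightarrow> complex" where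
  "PsiTheta eps v varpi psi' theta d h = (SOME c. \<exists>z u j.
      z \<in> Zgrp eps \<and> u \<in> Ugrp eps v \<and> j \<in> Jgrp eps v d \<and>
      h = mmul eps z (mmul eps u j) \<and> c = theta z * PsiJ eps varpi psi' d j)"

text \<open>Ind_H^K chi, realised as functions f on K (zero outside K) with
f(h k) = chi(h) f(k); K acts by right translation (g.f)(k) = f(k g).\<close>
definition IndSpace :: "'f::field \<Rightarrow> ('f \<times> 'f) m2 set \<Rightarrow> ('f \<times> 'f) m2 set \<Rightarrow>
    (('f \<times> 'f) m2 \<Rightarrow> complex) \<Rightarrow> (('f \<times> 'f) m2 \<Rightarrow> complex) set" where
  "IndSpace eps K H chi = {f. (\<forall>k. k \<notin> K \<longrightarrow> f k = 0) \<and>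
      (\<forall>h\<in>H. \<forall>k\<in>K. f (mmul eps h k) = chi h * f k)}"

definition Sd :: "'f::field \<Rightarrow> ('f \<Rightarrow> int) \<Rightarrow> 'f \<Rightarrow> ('f \<Rightarrow> complex) \<Rightarrow>
    (('f \<times> 'f) m2 \<Rightarrow> complex) \<Rightarrow> nat \<Rightarrow> (('f \<times> 'f) m2 \<Rightarrow> complex) set" where
  "Sd eps v varpi psi' theta d =
     IndSpace eps (Kgrp eps v) (ZUJ eps v d) (PsiTheta eps v varpi psi' theta d)"

text \<open>The direct sum of S_d over d with P d, realised as finitely supported
families (f_d)_d; and its subspace of K_n-fixed vectors.\<close>
definition tauSpace :: "'f::field \<Rightarrow> ('f \<Rightarrow> int) \<Rightarrow> 'f \<Rightarrow> ('f \<Rightarrow> complex) \<Rightarrow>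
    (('f \<times> 'f) m2 \<Rightarrow> complex) \<Rightarrow> (nat \<Rightarrow> bool) \<Rightarrow>
    (nat \<Rightarrow> ('f \<times> 'f) m2 \<Rightarrow> complex) set" where
  "tauSpace eps v varpi psi' theta P = {f.
      finite {d. f d \<noteq> (\<lambda>_. 0)} \<and>
      (\<forall>d. \<not> P d \<longrightarrow> f d = (\<lambda>_. 0)) \<and>
      (\<forall>d. P d \<longrightarrow> f d \<in> Sd eps v varpi psi' theta d)}"

definition fixedVecs :: "'f::field \<Rightarrow> ('f \<Rightarrow> int) \<Rightarrow> nat \<Rightarrow>
    (nat \<Rightarrow> ('f \<times> 'f) m2 \<Rightarrow> complex) set \<Rightarrow> (nat \<Rightarrow> ('f \<times> 'f) m2 \<Rightarrow> complex) set" where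
  "fixedVecs eps v n V = {f \<in> V. \<forall>d. \<forall>k\<in>Kgrp eps v. \<forall>g\<in>Kn eps v n.
      f d (mmul eps k g) = f d k}"

definition cscale :: "complex \<Rightarrow> (nat \<Rightarrow> 'b \<Rightarrow> complex) \<Rightarrow> (nat \<Rightarrow> 'b \<Rightarrow> complex)" where
  "cscale c f = (\<lambda>d x. c * f d x)"

definition cdim :: "(nat \<Rightarrow> 'b \<Rightarrow> complex) set \<Rightarrow> nat" where
  "cdim V = vector_space.dim cscale V"

end

theory Submission
  imports Defs
begin

(* Write H = Z U J_d, so that S_d = Ind_H^K Psi_theta. Since K_(d+1) is contained in J_d and
   Psi_theta is trivial on it, every vector of S_d is K_(d+1)-fixed. For n <= d, on the other
   hand, K_n contains a lower unipotent element of J_d on which Psi_theta is nontrivial, and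
   conjugating it by k shows that a K_n-fixed vector vanishes at every k. So the
   K_(2r+1)-fixed vectors of tau form the sum of the S_d with d <= 2r, and S_d has the
   functions supported on single cosets H k as a basis. These cosets are classified by the
   bottom row of k; since E/F is unramified (by Hensel's lemma, eps is not a square modulo p)
   the norm maps the units of O_E onto the units of O_F modulo every power of p, and one gets
   [K : H] = (q^2 - 1) q^(d-1). Summed over the even, resp. odd, d <= 2r this telescopes to
   q (q^(2r) - 1), resp. q^(2r) - 1. *)

section \<open>Valuation-theoretic preliminaries\<close>

locale local_field =
  fixes v :: "'f::field \<Rightarrow> int" and varpi :: 'f
  assumes nonarch: "nonarch_local_field v" and odd_res: "odd_residual_char v"
    and varpi_nz[simp]: "varpi \<noteq> 0" and v_varpi: "v varpi = 1"
begin

lemma vmult: "x \<noteq> 0 \<Longrightarrow> y \<noteq> 0 \<Longrightarrow> v (x * y) = v x + v y"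
  using nonarch unfolding nonarch_local_field_def by blast

lemma vadd: "x \<noteq> 0 \<Longrightarrow> y \<noteq> 0 \<Longrightarrow> x + y \<noteq> 0 \<Longrightarrow> v (x + y) \<ge> min (v x) (v y)"
  using nonarch unfolding nonarch_local_field_def by blast

lemma complete:
  fixes s :: "nat \<Rightarrow> 'f"
  assumes "\<forall>n. \<exists>N. \<forall>m\<ge>N. \<forall>k\<ge>N. s m - s k \<in> pF v n"
  shows "\<exists>L. \<forall>n. \<exists>N. \<forall>m\<ge>N. s m - L \<in> pF v n"
  using nonarch assms unfolding nonarch_local_field_def by blast

lemma finite_residue_field: "finite ((\<lambda>x. {y \<in> OF v. y - x \<in> pF v 1}) ` OF v)"
  using nonarch unfolding nonarch_local_field_def by blast

lemma two_nz: "(2::'f) \<noteq> 0" and v_two: "v 2 = 0"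
  using odd_res unfolding odd_residual_char_def by auto

lemma v_one: "v 1 = 0"
  using vmult[of 1 1] by simp

lemma vminus: "v (- x) = v x"
proof -
  have "v (-1) = 0" using vmult[of "-1" "-1"] v_one by simp
  then show ?thesis by (cases "x = 0") (use vmult[of "-1" x] in auto)
qed

lemma vinv: "x \<noteq> 0 \<Longrightarrow> v (inverse x) = - v x"
  using vmult[of x "inverse x"] v_one by simp

lemma vdiv: "x \<noteq> 0 \<Longrightarrow> y \<noteq> 0 \<Longrightarrow> v (x / y) = v x - v y"
  by (simp add: divide_inverse vmult vinv)

lemma vpow: "x \<noteq> 0 \<Longrightarrow> v (x ^ n) = int n * v x"
  by (induction n) (auto simp: v_one vmult algebra_simps)

lemma pF_add: "x \<in> pF v n \<Longrightarrow> y \<in> pF v n \<Longrightarrow> x + y \<in> pF v n"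
  unfolding pF_def using vadd[of x y] by force

lemma pF_minus_iff[simp]: "- x \<in> pF v n \<longleftrightarrow> x \<in> pF v n"
  unfolding pF_def by (auto simp: vminus)

lemma pF_0[simp]: "0 \<in> pF v n"
  by (simp add: pF_def)

lemma pF_diff: "x \<in> pF v n \<Longrightarrow> y \<in> pF v n \<Longrightarrow> x - y \<in> pF v n"
  using pF_add[of x n "-y"] by simp

lemma pF_mult: "x \<in> pF v a \<Longrightarrow> y \<in> pF v b \<Longrightarrow> x * y \<in> pF v (a + b)"
  unfolding pF_def by (cases "x = 0"; cases "y = 0") (auto simp: vmult)

lemma pF_mono: "a \<le> b \<Longrightarrow> x \<in> pF v b \<Longrightarrow> x \<in> pF v a"
  unfolding pF_def by auto

lemma pF_mult_OF: "x \<in> OF v \<Longrightarrow> y \<in> pF v b \<Longrightarrow> x * y \<in> pF v b"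
  using pF_mult[of x 0 y b] by (simp add: OF_def)

lemma pF_mult_OF': "x \<in> pF v b \<Longrightarrow> y \<in> OF v \<Longrightarrow> x * y \<in> pF v b"
  using pF_mult[of x b y 0] by (simp add: OF_def)

lemma OF_pF: "0 \<le> n \<Longrightarrow> x \<in> pF v n \<Longrightarrow> x \<in> OF v"
  unfolding OF_def using pF_mono by blast

lemma pF1_OF: "x \<in> pF v 1 \<Longrightarrow> x \<in> OF v"
  using OF_pF[of 1] by simp

lemma OF_iff: "x \<in> OF v \<longleftrightarrow> x = 0 \<or> 0 \<le> v x"
  by (simp add: OF_def pF_def)

lemma OF_0[simp]: "0 \<in> OF v" and OF_1[simp]: "1 \<in> OF v"
  by (simp_all add: OF_iff v_one)

lemma one_notin_pF: "1 \<notin> pF v 1"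
  by (simp add: pF_def v_one)

lemma OF_add: "x \<in> OF v \<Longrightarrow> y \<in> OF v \<Longrightarrow> x + y \<in> OF v"
  by (simp add: OF_def pF_add)

lemma OF_diff: "x \<in> OF v \<Longrightarrow> y \<in> OF v \<Longrightarrow> x - y \<in> OF v"
  by (simp add: OF_def pF_diff)

lemma OF_minus: "x \<in> OF v \<Longrightarrow> - x \<in> OF v"
  by (simp add: OF_def)

lemma OF_mult: "x \<in> OF v \<Longrightarrow> y \<in> OF v \<Longrightarrow> x * y \<in> OF v"
  using pF_mult[of x 0 y 0] by (simp add: OF_def)

lemma OF_of_nat[simp]: "of_nat n \<in> OF v"
  by (induction n) (auto intro: OF_add)

lemma OF_numeral[simp]: "numeral n \<in> OF v"
  using OF_of_nat[of "numeral n"] by simp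

lemma OF_pow: "x \<in> OF v \<Longrightarrow> x ^ n \<in> OF v"
  by (induction n) (auto intro: OF_mult)

lemma OF_varpi[simp]: "varpi \<in> OF v"
  by (simp add: OF_iff v_varpi)

lemma pF_all_imp_zero:
  assumes "\<And>n. n \<ge> 0 \<Longrightarrow> x \<in> pF v n" shows "x = 0"
  using assms[of "max 0 (v x + 1)"] by (auto simp: pF_def)

lemma OF_cases: "x \<in> OF v \<Longrightarrow> x \<in> pF v 1 \<or> (x \<noteq> 0 \<and> v x = 0)"
  by (auto simp: OF_iff pF_def)

lemma unit_notin_pF: "x \<noteq> 0 \<Longrightarrow> v x = 0 \<Longrightarrow> x \<notin> pF v 1"
  by (simp add: pF_def)

lemma unit_inverse_OF: "x \<noteq> 0 \<Longrightarrow> v x = 0 \<Longrightarrow> inverse x \<in> OF v"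
  by (simp add: OF_iff vinv)

lemma pF_divide_unit: "x \<in> pF v n \<Longrightarrow> y \<noteq> 0 \<Longrightarrow> v y = 0 \<Longrightarrow> x / y \<in> pF v n"
  using pF_mult[of x n "inverse y" 0] unit_inverse_OF[of y] by (simp add: OF_def divide_inverse)

lemma pF1_prime:
  assumes "a \<in> OF v" "b \<in> OF v" "a * b \<in> pF v 1"
  shows "a \<in> pF v 1 \<or> b \<in> pF v 1"
  using OF_cases[OF assms(1)] OF_cases[OF assms(2)] assms(3) unit_notin_pF[of "a * b"]
  by (auto simp: vmult)

lemma pF1_square_imp: "x * x \<in> pF v 1 \<Longrightarrow> x \<in> OF v \<Longrightarrow> x \<in> pF v 1"
  using pF1_prime by blast

lemma varpi_pow_nz: "varpi ^ k \<noteq> 0" and v_varpi_pow: "v (varpi ^ k) = int k"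
  by (auto simp: vpow v_varpi)

lemma varpi_pow_pF: "varpi ^ k \<in> pF v (int k)"
  by (simp add: pF_def v_varpi_pow)

lemma pF_mult_varpi_pow: "x \<in> pF v a \<Longrightarrow> varpi ^ n * x \<in> pF v (int n + a)"
  using pF_mult[OF varpi_pow_pF] by blast

lemma pF_divide_varpi_pow: "x \<in> pF v (a + int n) \<Longrightarrow> x / varpi ^ n \<in> pF v a"
  using pF_mult[of x "a + int n" "inverse (varpi ^ n)" "- int n"]
  by (simp add: pF_def divide_inverse vinv varpi_pow_nz v_varpi_pow)

lemma newton_step:
  assumes a: "a \<noteq> 0" "v a = 0" and s: "s \<in> OF v" "s * s - a \<in> pF v (int n + 1)"
  defines "s' \<equiv> s - (s * s - a) / (2 * s)"
  shows "s' \<in> OF v" "s' * s' - a \<in> pF v (int n + 2)" "s' - s \<in> pF v (int n + 1)"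
proof -
  have "s \<notin> pF v 1"
  proof
    assume "s \<in> pF v 1"
    then have "s * s \<in> pF v 1" using pF_mult_OF[OF s(1)] by blast
    moreover have "s * s - a \<in> pF v 1" using s(2) pF_mono[of 1 "int n + 1"] by simp
    ultimately have "s * s - (s * s - a) \<in> pF v 1" using pF_diff by blast
    then show False using unit_notin_pF[OF a] by simp
  qed
  then have u: "s \<noteq> 0" "v (2 * s) = 0" using OF_cases[OF s(1)] by (auto simp: vmult two_nz v_two)
  define e where "e = (s * s - a) / (2 * s)"
  have e: "e \<in> pF v (int n + 1)" unfolding e_def using pF_divide_unit[OF s(2)] u two_nz by simp
  show "s' - s \<in> pF v (int n + 1)" using e by (simp add: s'_def e_def)
  show "s' \<in> OF v" using OF_diff[OF s(1) OF_pF[OF _ e]] by (simp add: s'_def e_def)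
  have "(4::'f) \<noteq> 0" using two_nz mult_eq_0_iff[of "2::'f" 2] by simp
  then have "s' * s' - a = e * e"
    using u(1) two_nz by (simp add: s'_def e_def field_simps)
  then show "s' * s' - a \<in> pF v (int n + 2)"
    using pF_mult[OF e e] pF_mono[of "int n + 2" "int n + 1 + (int n + 1)"] by simp
qed

lemma converges_if_steps_in_pF:
  fixes s :: "nat \<Rightarrow> 'f"
  assumes step: "\<And>n. s (Suc n) - s n \<in> pF v (int n + 1)"
  shows "\<exists>L. \<forall>n. \<exists>N. \<forall>m\<ge>N. s m - L \<in> pF v n"
proof (rule complete, intro allI)
  have tail: "s (k + j) - s k \<in> pF v (int k + 1)" for k j
  proof (induction j)
    case (Suc j)
    have "s (Suc (k + j)) - s (k + j) \<in> pF v (int k + 1)"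
      using step[of "k + j"] pF_mono[of "int k + 1" "int (k + j) + 1"] by simp
    then have "(s (Suc (k + j)) - s (k + j)) + (s (k + j) - s k) \<in> pF v (int k + 1)"
      using pF_add[OF _ Suc] by blast
    then show ?case by simp
  qed simp
  fix n :: int
  have "s m - s k \<in> pF v n" if "m \<ge> nat n" "k \<ge> nat n" for m k
    using pF_diff[OF tail[of "nat n" "m - nat n"] tail[of "nat n" "k - nat n"]] that
      pF_mono[of n "int (nat n) + 1"] by simp
  then show "\<exists>N. \<forall>m\<ge>N. \<forall>k\<ge>N. s m - s k \<in> pF v n" by blast
qed

lemma hensel_sqrt:
  assumes a: "a \<noteq> 0" "v a = 0" and x: "x \<in> OF v" "x * x - a \<in> pF v 1"
  shows "\<exists>y. y * y = a"
proof -
  define s where "s n = ((\<lambda>s. s - (s * s - a) / (2 * s)) ^^ n) x" for n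
  have s: "s n \<in> OF v \<and> s n * s n - a \<in> pF v (int n + 1)" for n
  proof (induction n)
    case (Suc n)
    then show ?case
      using newton_step(1,2)[OF a, of "s n" n] pF_mono[of "int (Suc n) + 1" "int n + 2"]
      by (simp add: s_def)
  qed (use x in \<open>simp add: s_def\<close>)
  have "s (Suc n) - s n \<in> pF v (int n + 1)" for n
    using newton_step(3)[OF a, of "s n" n] s[of n] by (simp add: s_def)
  then obtain L where L: "\<forall>n. \<exists>N. \<forall>m\<ge>N. s m - L \<in> pF v n"
    using converges_if_steps_in_pF by blast
  have "L * L - a \<in> pF v n" if n: "n \<ge> 0" for n
  proof -
    obtain N where N: "\<forall>m\<ge>N. s m - L \<in> pF v n" using L by blast
    define M where "M = max N (nat n)"
    have d: "s M - L \<in> pF v n" using N by (simp add: M_def)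
    have sM: "s M \<in> OF v" "s M * s M - a \<in> pF v n"
      using s[of M] pF_mono[of n "int M + 1"] by (auto simp: M_def)
    have "L + s M \<in> OF v"
      using OF_diff[OF OF_add[OF sM(1) sM(1)] OF_pF[OF n d]] by (simp add: algebra_simps)
    moreover have "L * L - a = (s M * s M - a) - (s M - L) * (L + s M)"
      by (simp add: algebra_simps)
    ultimately show ?thesis using pF_diff[OF sM(2) pF_mult_OF'[OF d]] by metis
  qed
  then show ?thesis using pF_all_imp_zero[of "L * L - a"] by auto
qed

end

lemma card_image_eq_kernel:
  assumes "\<forall>a\<in>A. \<forall>b\<in>A. f a = f b \<longleftrightarrow> k a = k b"
  shows "card (f ` A) = card (k ` A)"
proof -
  define phi where "phi y = k (inv_into A f y)" for y
  have pk: "phi (f a) = k a" if "a \<in> A" for a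
  proof -
    have "inv_into A f (f a) \<in> A" "f (inv_into A f (f a)) = f a"
      using that by (auto intro: inv_into_into f_inv_into_f)
    then show ?thesis using assms that unfolding phi_def by metis
  qed
  have "k ` A = phi ` (f ` A)" using pk by (auto simp: image_iff)
  moreover have "inj_on phi (f ` A)"
    using pk assms by (auto simp: inj_on_def)
  ultimately show ?thesis by (simp add: card_image)
qed

lemma image_pair_eq_Times:
  assumes "\<forall>a\<in>A. \<forall>b\<in>A. \<exists>c\<in>A. g c = g a \<and> h c = h b"
  shows "(\<lambda>a. (g a, h a)) ` A = g ` A \<times> h ` A"
  using assms by (auto simp: image_iff) metis

definition res_class :: "('f::field \<Rightarrow> int) \<Rightarrow> int \<Rightarrow> 'f \<Rightarrow> 'f set" where
  "res_class v j x = {y \<in> OF v. y - x \<in> pF v j}"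

definition OF_units :: "('f::field \<Rightarrow> int) \<Rightarrow> 'f set" where
  "OF_units v = {x \<in> OF v. x \<notin> pF v 1}"

context local_field
begin

lemma res_class_eq_iff:
  assumes "x \<in> OF v" "y \<in> OF v"
  shows "res_class v j x = res_class v j y \<longleftrightarrow> x - y \<in> pF v j"
proof
  assume "res_class v j x = res_class v j y"
  moreover have "x \<in> res_class v j x" using assms by (simp add: res_class_def)
  ultimately show "x - y \<in> pF v j" by (simp add: res_class_def)
next
  assume a: "x - y \<in> pF v j"
  have "z - x \<in> pF v j \<longleftrightarrow> z - y \<in> pF v j" for z
    using pF_add[OF _ a, of "z - x"] pF_diff[OF _ a, of "z - y"] by auto
  then show "res_class v j x = res_class v j y" by (auto simp: res_class_def)
qed

lemma OF_units_OF: "x \<in> OF_units v \<Longrightarrow> x \<in> OF v"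
  by (simp add: OF_units_def)

definition q where "q = residue_card v"

lemma card_residue_field: "card (res_class v 1 ` OF v) = q"
  and finite_residue_classes_1: "finite (res_class v 1 ` OF v)"
  using finite_residue_field unfolding q_def residue_card_def res_class_def by simp_all

lemma q_ge_1: "q \<ge> 1"
proof -
  have "res_class v 1 0 \<in> res_class v 1 ` OF v" by simp
  then show ?thesis
    using card_residue_field finite_residue_classes_1 card_gt_0_iff[of "res_class v 1 ` OF v"]
    by fastforce
qed

definition rep_mod :: "nat \<Rightarrow> 'f \<Rightarrow> 'f" where
  "rep_mod n x = (SOME y. y \<in> res_class v (int n) x)"

definition digit :: "nat \<Rightarrow> 'f \<Rightarrow> 'f" where
  "digit n x = (x - rep_mod n x) / varpi ^ n"

lemma rep_mod: "x \<in> OF v \<Longrightarrow> rep_mod n x \<in> OF v \<and> rep_mod n x - x \<in> pF v (int n)"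
  using someI[of "\<lambda>y. y \<in> res_class v (int n) x" x]
  by (simp add: rep_mod_def res_class_def)

lemma digit_OF: "x \<in> OF v \<Longrightarrow> digit n x \<in> OF v"
  using pF_divide_varpi_pow[of "x - rep_mod n x" 0 n] rep_mod[of x n]
    pF_minus_iff[of "rep_mod n x - x" "int n"]
  by (simp add: digit_def OF_def)

lemma digit_diff:
  "res_class v (int n) x = res_class v (int n) y \<Longrightarrow> digit n x - digit n y = (x - y) / varpi ^ n"
  by (simp add: digit_def rep_mod_def diff_divide_distrib[symmetric])

lemma res_class_Suc_iff:
  assumes "x \<in> OF v" "y \<in> OF v"
  shows "res_class v (int (Suc n)) x = res_class v (int (Suc n)) y \<longleftrightarrow>
    res_class v (int n) x = res_class v (int n) y \<and> res_class v 1 (digit n x) = res_class v 1 (digit n y)"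
proof -
  have "x - y \<in> pF v (1 + int n) \<longleftrightarrow>
      x - y \<in> pF v (int n) \<and> (x - y) / varpi ^ n \<in> pF v 1" (is "?l \<longleftrightarrow> ?r")
  proof
    assume ?l then show ?r using pF_mono[of "int n" "1 + int n"] pF_divide_varpi_pow by simp
  next
    assume ?r then show ?l using pF_mult_varpi_pow[of "(x - y) / varpi ^ n" 1 n] varpi_pow_nz
      by (simp add: add.commute)
  qed
  then show ?thesis
    using res_class_eq_iff assms digit_OF digit_diff[of n x y] by (auto simp: add.commute)
qed

lemma digit_lift:
  fixes n :: nat
  assumes "a \<in> OF v" "b \<in> OF v"
  defines "c \<equiv> rep_mod n a + varpi ^ n * b"
  shows "c \<in> OF v" "res_class v (int n) c = res_class v (int n) a" "digit n c = b"
proof -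
  show c: "c \<in> OF v" unfolding c_def using rep_mod[OF assms(1)] assms(2) by (simp add: OF_add OF_mult OF_pow)
  have "varpi ^ n * b \<in> pF v (int n)"
    using pF_mult_varpi_pow[of b 0 n] assms(2) by (simp add: OF_def)
  then have "(rep_mod n a - a) + varpi ^ n * b \<in> pF v (int n)"
    using pF_add rep_mod[OF assms(1)] by blast
  then show cc: "res_class v (int n) c = res_class v (int n) a"
    using res_class_eq_iff[OF c assms(1)] by (simp add: c_def algebra_simps)
  show "digit n c = b"
    using rep_mod_def[of n c] rep_mod_def[of n a] cc varpi_pow_nz by (simp add: digit_def c_def)
qed

lemma card_res_class: "card (res_class v (int n) ` OF v) = q ^ n"
proof (induction n)
  case 0
  have "res_class v 0 x = OF v" if "x \<in> OF v" for x
    using that OF_diff by (auto simp: res_class_def OF_def)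
  then have "res_class v (int 0) ` OF v = {OF v}" using OF_0 by (auto simp: image_iff) (metis OF_0)
  then show ?case by simp
next
  case (Suc n)
  let ?k = "\<lambda>x. (res_class v (int n) x, res_class v 1 (digit n x))"
  have "card (res_class v (int (Suc n)) ` OF v) = card (?k ` OF v)"
    by (rule card_image_eq_kernel) (use res_class_Suc_iff in blast)
  also have "?k ` OF v = res_class v (int n) ` OF v \<times> (\<lambda>x. res_class v 1 (digit n x)) ` OF v"
  proof (rule image_pair_eq_Times, intro ballI)
    fix a b assume "a \<in> OF v" "b \<in> OF v"
    then show "\<exists>c\<in>OF v. res_class v (int n) c = res_class v (int n) a \<and>
        res_class v 1 (digit n c) = res_class v 1 (digit n b)"
      using digit_lift[of a "digit n b" n] digit_OF by auto
  qed
  also have "(\<lambda>x. res_class v 1 (digit n x)) ` OF v = res_class v 1 ` OF v"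
  proof -
    have "res_class v 1 b \<in> (\<lambda>x. res_class v 1 (digit n x)) ` OF v" if "b \<in> OF v" for b
      using digit_lift(1,3)[OF OF_0 that, of n] by (metis image_eqI)
    then show ?thesis using digit_OF by auto
  qed
  finally show ?case using Suc card_residue_field by (simp add: card_cartesian_product)
qed

lemma finite_res_class: "finite (res_class v (int n) ` OF v)"
  using card_res_class[of n] q_ge_1 by (metis card.infinite not_one_le_zero one_le_power)

lemma card_res_class_pF1: "card (res_class v (int n + 1) ` pF v 1) = q ^ n"
proof -
  have ker: "\<forall>x\<in>pF v 1. \<forall>y\<in>pF v 1. res_class v (int n + 1) x = res_class v (int n + 1) y \<longleftrightarrow>
     res_class v (int n) (x / varpi) = res_class v (int n) (y / varpi)"
  proof (intro ballI)
    fix x y assume xy: "x \<in> pF v 1" "y \<in> pF v 1"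
    have o: "x / varpi \<in> OF v" "y / varpi \<in> OF v"
      using pF_divide_varpi_pow[of x 0 1] pF_divide_varpi_pow[of y 0 1] xy by (simp_all add: OF_def)
    have "x - y \<in> pF v (int n + 1) \<longleftrightarrow> (x - y) / varpi \<in> pF v (int n)"
      using pF_divide_varpi_pow[of "x - y" "int n" 1] pF_mult_varpi_pow[of "(x - y) / varpi" "int n" 1]
      by (auto simp: add.commute)
    then show "res_class v (int n + 1) x = res_class v (int n + 1) y \<longleftrightarrow>
        res_class v (int n) (x / varpi) = res_class v (int n) (y / varpi)"
      using res_class_eq_iff[OF pF1_OF[OF xy(1)] pF1_OF[OF xy(2)]] res_class_eq_iff[OF o]
      by (simp add: diff_divide_distrib)
  qed
  have "(\<lambda>x. res_class v (int n) (x / varpi)) ` pF v 1 = res_class v (int n) ` OF v"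
  proof -
    have "varpi * z \<in> pF v 1" if "z \<in> OF v" for z
      using pF_mult_varpi_pow[of z 0 1] that by (simp add: OF_def)
    then have "res_class v (int n) z \<in> (\<lambda>x. res_class v (int n) (x / varpi)) ` pF v 1"
      if "z \<in> OF v" for z
      using that image_eqI[of _ "\<lambda>x. res_class v (int n) (x / varpi)" "varpi * z"] by simp
    then show ?thesis using pF_divide_varpi_pow[of _ 0 1] by (auto simp: OF_def)
  qed
  then show ?thesis using card_image_eq_kernel[OF ker] card_res_class[of n] by simp
qed

lemma res_class_units_pF1_split:
  assumes "j \<ge> 1"
  shows "res_class v j ` OF v = res_class v j ` OF_units v \<union> res_class v j ` pF v 1"
    "res_class v j ` OF_units v \<inter> res_class v j ` pF v 1 = {}"
proof -
  show "res_class v j ` OF v = res_class v j ` OF_units v \<union> res_class v j ` pF v 1"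
    using pF1_OF by (auto simp: OF_units_def)
  show "res_class v j ` OF_units v \<inter> res_class v j ` pF v 1 = {}"
  proof (rule ccontr)
    assume "res_class v j ` OF_units v \<inter> res_class v j ` pF v 1 \<noteq> {}"
    then obtain x y where xy: "x \<in> OF_units v" "y \<in> pF v 1" "res_class v j x = res_class v j y"
      by auto
    then have "x - y \<in> pF v j"
      using res_class_eq_iff[OF OF_units_OF pF1_OF] by blast
    then have "x - y \<in> pF v 1" using pF_mono assms by blast
    then have "(x - y) + y \<in> pF v 1" using pF_add xy(2) by blast
    then show False using xy(1) by (simp add: OF_units_def)
  qed
qed

lemma finite_res_class_units: "finite (res_class v (int n) ` OF_units v)"
  by (rule finite_subset[OF _ finite_res_class[of n]]) (auto simp: OF_units_def)

lemma finite_res_class_pF1: "finite (res_class v (int n) ` pF v 1)"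
  by (rule finite_subset[OF _ finite_res_class[of n]]) (auto intro: pF1_OF)

lemma card_res_class_units: "card (res_class v (int n + 1) ` OF_units v) = q ^ (n + 1) - q ^ n"
  using res_class_units_pF1_split[of "int n + 1"] card_res_class[of "n + 1"] card_res_class_pF1[of n]
    finite_res_class_units[of "n + 1"] finite_res_class_pF1[of "n + 1"]
  by (simp add: card_Un_disjoint add.commute)

lemma card_image_le_twice:
  assumes fin: "finite (f ` A)"
    and two: "\<And>y. y \<in> A \<Longrightarrow> \<exists>z. \<forall>x\<in>A. f x = f y \<longrightarrow> g x = g y \<or> g x = z"
  shows "card (g ` A) \<le> 2 * card (f ` A)"
proof -
  let ?fiber = "\<lambda>b. g ` {x \<in> A. f x = b}"
  have card_fiber: "card (?fiber b) \<le> 2" if b: "b \<in> f ` A" for b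
  proof -
    obtain y z where "y \<in> A" "b = f y" "\<forall>x\<in>A. f x = f y \<longrightarrow> g x = g y \<or> g x = z"
      using b two by blast
    then have "?fiber b \<subseteq> {g y, z}" by blast
    moreover have "card {g y, z} \<le> 2" by (cases "g y = z") simp_all
    ultimately show ?thesis using card_mono[of "{g y, z}" "?fiber b"] by simp
  qed
  have "g ` A = (\<Union>b\<in>f ` A. ?fiber b)" by blast
  then have "card (g ` A) \<le> (\<Sum>b\<in>f ` A. card (?fiber b))"
    using card_UN_le[OF fin] by simp
  also have "\<dots> \<le> 2 * card (f ` A)"
    using sum_bounded_above[of "f ` A" "\<lambda>b. card (?fiber b)" 2] card_fiber by (simp add: mult.commute)
  finally show ?thesis .
qed

lemma squares_count: "q + 1 \<le> 2 * card ((\<lambda>x. res_class v 1 (x * x)) ` OF v)"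
proof -
  let ?sq = "\<lambda>x. res_class v 1 (x * x)"
  have square_roots: "res_class v 1 x = res_class v 1 y \<or> res_class v 1 x = res_class v 1 (- y)"
    if "x \<in> OF v" "y \<in> OF v" "?sq x = ?sq y" for x y
  proof -
    have "(x - y) * (x + y) \<in> pF v 1"
      using that res_class_eq_iff[of "x * x" "y * y"] by (simp add: OF_mult algebra_simps)
    then show ?thesis
      using pF1_prime[of "x - y" "x + y"] that res_class_eq_iff OF_minus
      by (simp add: OF_diff OF_add)
  qed
  have fin_sq: "finite (?sq ` OF_units v)"
    by (rule finite_subset[OF _ finite_residue_classes_1]) (auto simp: OF_units_def OF_mult)
  have "q - 1 = card (res_class v 1 ` OF_units v)"
    using card_res_class_units[of 0] by simp
  also have "\<dots> \<le> 2 * card (?sq ` OF_units v)"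
  proof (rule card_image_le_twice[OF fin_sq])
    fix y assume "y \<in> OF_units v"
    then show "\<exists>z. \<forall>x\<in>OF_units v. ?sq x = ?sq y \<longrightarrow> res_class v 1 x = res_class v 1 y \<or> res_class v 1 x = z"
      using square_roots OF_units_OF by blast
  qed
  finally have units: "q - 1 \<le> 2 * card (?sq ` OF_units v)" .
  have zero_class: "res_class v 1 0 \<notin> ?sq ` OF_units v"
  proof
    assume "res_class v 1 0 \<in> ?sq ` OF_units v"
    then obtain x where "x \<in> OF_units v" "res_class v 1 0 = ?sq x" by blast
    then show False
      using res_class_eq_iff[OF OF_0, of "x * x"] pF1_square_imp[of x]
      by (auto simp: OF_units_def OF_mult)
  qed
  have "res_class v 1 0 = ?sq 0" by simp
  then have sub: "insert (res_class v 1 0) (?sq ` OF_units v) \<subseteq> ?sq ` OF v"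
    using OF_units_OF OF_0 by blast
  have fin: "finite (?sq ` OF v)"
    by (rule finite_subset[OF _ finite_residue_classes_1]) (auto simp: OF_mult)
  have "card (?sq ` OF_units v) + 1 = card (insert (res_class v 1 0) (?sq ` OF_units v))"
    using zero_class fin_sq by simp
  also have "\<dots> \<le> card (?sq ` OF v)" using card_mono[OF fin sub] .
  finally show ?thesis using units q_ge_1 by linarith
qed

end

section \<open>The unramified quadratic extension\<close>

definition enorm :: "'f::field \<Rightarrow> 'f \<times> 'f \<Rightarrow> 'f" where
  "enorm eps z = fst z * fst z - eps * snd z * snd z"

definition einv :: "'f::field \<Rightarrow> 'f \<times> 'f \<Rightarrow> 'f \<times> 'f" where
  "einv eps z = (fst z / enorm eps z, - snd z / enorm eps z)"

definition eunit :: "'f::field \<Rightarrow> ('f \<Rightarrow> int) \<Rightarrow> 'f \<times> 'f \<Rightarrow> bool" where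
  "eunit eps v z \<longleftrightarrow> z \<in> OE v \<and> enorm eps z \<noteq> 0 \<and> v (enorm eps z) = 0"

lemma E_components[simp]:
  "fst (emul eps z w) = fst z * fst w + eps * snd z * snd w"
  "snd (emul eps z w) = fst z * snd w + snd z * fst w"
  "fst (eadd z w) = fst z + fst w" "snd (eadd z w) = snd z + snd w"
  "fst (esub z w) = fst z - fst w" "snd (esub z w) = snd z - snd w"
  "fst (econj z) = fst z" "snd (econj z) = - snd z"
  "fst e0 = 0" "snd e0 = 0" "fst e1 = 1" "snd e1 = 0" "fst esqrt = 0" "snd esqrt = 1"
  "fst (emb x) = x" "snd (emb x) = 0"
  "fst (einv eps z) = fst z / enorm eps z" "snd (einv eps z) = - snd z / enorm eps z"
  by (simp_all add: emul_def eadd_def esub_def econj_def e0_def e1_def esqrt_def emb_def einv_def)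

lemma emul_comm: "emul eps z w = emul eps w z"
  by (rule prod_eqI) (simp_all add: algebra_simps)

lemma emul_assoc: "emul eps (emul eps x y) z = emul eps x (emul eps y z)"
  by (rule prod_eqI) (simp_all add: algebra_simps)

lemma emul_e1[simp]: "emul eps e1 z = z" "emul eps z e1 = z"
  by (rule prod_eqI; simp)+

lemma emul_e0[simp]: "emul eps e0 z = e0" "emul eps z e0 = e0"
  by (rule prod_eqI; simp)+

lemma eadd_e0[simp]: "eadd e0 z = z" "eadd z e0 = z"
  by (rule prod_eqI; simp)+

lemma esub_e0[simp]: "esub z e0 = z"
  by (rule prod_eqI; simp)

lemma eadd_comm: "eadd x y = eadd y x"
  by (rule prod_eqI) (simp_all add: add.commute)

lemma enorm_mult: "enorm eps (emul eps z w) = enorm eps z * enorm eps w"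
  by (simp add: enorm_def algebra_simps)

lemma enorm_conj[simp]: "enorm eps (econj z) = enorm eps z"
  by (simp add: enorm_def)

lemma enorm_e1[simp]: "enorm eps e1 = 1"
  by (simp add: enorm_def)

lemma emul_conj_self_eq_1: "enorm eps l = 1 \<Longrightarrow> emul eps l (econj l) = e1"
  and emul_conj_self_eq_1': "enorm eps l = 1 \<Longrightarrow> emul eps (econj l) l = e1"
  by (rule prod_eqI; simp add: enorm_def algebra_simps)+

lemma emul_esub_cancel:
  fixes x :: "'f::field \<times> 'f"
  assumes "emul eps x y = e1"
  shows "emul eps (esub (emul eps r x) x) y = esub r e1"
proof -
  have h: "fst x * fst y + eps * snd x * snd y = 1" "fst x * snd y + snd x * fst y = 0"
    using assms by (auto simp: prod_eq_iff)
  show ?thesis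
    apply (rule prod_eqI)
    using h by (simp_all add: algebra_simps) (algebra, algebra)
qed

lemma ratio_diff:
  fixes U U' W W' :: "'f::field \<times> 'f"
  assumes "emul eps U iU = e1" "emul eps U' iU' = e1"
  shows "esub (emul eps W' iU') (emul eps W iU) = emul eps (esub (emul eps W' U) (emul eps W U')) (emul eps iU' iU)"
proof -
  have "emul eps (esub (emul eps W' U) (emul eps W U')) (emul eps iU' iU) =
     esub (emul eps (emul eps W' iU') (emul eps U iU)) (emul eps (emul eps W iU) (emul eps U' iU'))"
    by (rule prod_eqI) (simp_all add: algebra_simps)
  then show ?thesis using assms by simp
qed

lemma cayley_identity:
  fixes mu :: "'f::field \<times> 'f"
  assumes "c * c = 1" and w: "w = (1 + c * fst mu, c * snd mu)"
    and "emul eps w iw = e1" "emul eps (econj w) iwc = e1"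
  shows "mu = emul eps (emul eps (emb c) (emul eps w iwc)) (eadd e1 (emul eps (emb (enorm eps mu - 1)) iw))"
proof -
  obtain m1 m2 where mu: "mu = (m1, m2)" by (cases mu)
  obtain i1 i2 where iw: "iw = (i1, i2)" by (cases iw)
  obtain j1 j2 where iwc: "iwc = (j1, j2)" by (cases iwc)
  have h: "(1 + c * m1) * i1 + eps * (c * m2) * i2 = 1" "(1 + c * m1) * i2 + c * m2 * i1 = 0"
     "(1 + c * m1) * j1 - eps * (c * m2) * j2 = 1" "(1 + c * m1) * j2 - c * m2 * j1 = 0"
    using assms unfolding mu iw iwc by (auto simp: prod_eq_iff)
  show ?thesis unfolding w mu iw iwc
    by (rule prod_eqI; use h assms(1) in \<open>simp add: enorm_def\<close>; algebra)
qed

locale unramified_quadratic = local_field v varpi for v :: "'f::field \<Rightarrow> int" and varpi +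
  fixes eps :: 'f
  assumes eps_nz[simp]: "eps \<noteq> 0" and v_eps: "v eps = 0" and eps_nonsquare: "\<not> (\<exists>x. x * x = eps)"
begin

lemma OF_eps[simp]: "eps \<in> OF v"
  by (simp add: OF_iff v_eps)

lemma eps_notin_pF1: "eps \<notin> pF v 1"
  by (simp add: unit_notin_pF v_eps)

lemma eps_nonsquare_mod_p: "x \<in> OF v \<Longrightarrow> x * x - eps \<notin> pF v 1"
  using hensel_sqrt[OF eps_nz v_eps] eps_nonsquare by blast

lemma norm_form_pF1_imp:
  assumes "a \<in> OF v" "b \<in> OF v" "a * a - eps * b * b \<in> pF v 1"
  shows "a \<in> pF v 1 \<and> b \<in> pF v 1"
proof -
  have b: "b \<in> pF v 1"
  proof (rule ccontr)
    assume "b \<notin> pF v 1"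
    then have u: "b * b \<noteq> 0" "v (b * b) = 0" using OF_cases[OF assms(2)] by (auto simp: vmult)
    have "(a * a - eps * b * b) / (b * b) = (a / b) * (a / b) - eps"
      using u by (simp add: field_simps)
    moreover have "a / b \<in> OF v"
      using OF_mult[OF assms(1) unit_inverse_OF[of b]] u by (simp add: divide_inverse vmult)
    ultimately show False
      using eps_nonsquare_mod_p[of "a / b"] pF_divide_unit[OF assms(3) u] by simp
  qed
  have "eps * b * b \<in> pF v 1" using pF_mult_OF[OF OF_mult[OF OF_eps assms(2)] b] by (simp add: mult.assoc)
  then have "a * a \<in> pF v 1" using pF_add[OF assms(3)] by fastforce
  then show ?thesis using pF1_square_imp assms b by blast
qed

lemma enorm_eq_0_iff: "enorm eps z = 0 \<longleftrightarrow> z = e0"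
proof
  assume h: "enorm eps z = 0"
  show "z = e0"
  proof (cases "snd z = 0")
    case True then show ?thesis using h by (simp add: enorm_def prod_eq_iff)
  next
    case False
    have "(fst z / snd z) * (fst z / snd z) = eps"
      using h False by (simp add: enorm_def field_simps)
    then show ?thesis using eps_nonsquare by blast
  qed
qed (simp add: enorm_def)

lemma emul_einv:
  assumes "z \<noteq> e0"
  shows "emul eps z (einv eps z) = e1"
proof -
  have n: "enorm eps z \<noteq> 0" using enorm_eq_0_iff assms by simp
  have "fst z * (fst z / enorm eps z) + eps * snd z * (- snd z / enorm eps z) =
        (fst z * fst z - eps * snd z * snd z) / enorm eps z"
    using n by (simp add: field_simps)
  also have "\<dots> = 1" using n by (simp add: enorm_def)
  finally have 1: "fst z * (fst z / enorm eps z) + eps * snd z * (- snd z / enorm eps z) = 1" .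
  have 2: "fst z * (- snd z / enorm eps z) + snd z * (fst z / enorm eps z) = 0"
    using n by (simp add: field_simps)
  show ?thesis using 1 2 by (intro prod_eqI) simp_all
qed

lemma emul_nonzero: "z \<noteq> e0 \<Longrightarrow> w \<noteq> e0 \<Longrightarrow> emul eps z w \<noteq> e0"
  using enorm_eq_0_iff enorm_mult by (metis mult_eq_0_iff)

lemma pE_iff: "z \<in> pE v n \<longleftrightarrow> fst z \<in> pF v n \<and> snd z \<in> pF v n" by (simp add: pE_def)

lemma OE_iff: "z \<in> OE v \<longleftrightarrow> fst z \<in> OF v \<and> snd z \<in> OF v" by (simp add: OE_def pE_def OF_def)

lemma pE_0[simp]: "e0 \<in> pE v n" by (simp add: pE_iff)

lemma OE_0[simp]: "e0 \<in> OE v"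
  by (simp add: OE_iff)

lemma pE_add: "z \<in> pE v n \<Longrightarrow> w \<in> pE v n \<Longrightarrow> eadd z w \<in> pE v n" by (simp add: pE_iff pF_add)

lemma pE_diff: "z \<in> pE v n \<Longrightarrow> w \<in> pE v n \<Longrightarrow> esub z w \<in> pE v n" by (simp add: pE_iff pF_diff)

lemma pE_conj_iff[simp]: "econj z \<in> pE v n \<longleftrightarrow> z \<in> pE v n" by (simp add: pE_iff)

lemma OE_conj_iff[simp]: "econj z \<in> OE v \<longleftrightarrow> z \<in> OE v"
  by (simp add: OE_iff OF_iff vminus)

lemma pE_mono: "a \<le> b \<Longrightarrow> z \<in> pE v b \<Longrightarrow> z \<in> pE v a" by (auto simp: pE_iff intro: pF_mono)

lemma OE_pE: "0 \<le> n \<Longrightarrow> z \<in> pE v n \<Longrightarrow> z \<in> OE v" by (simp add: OE_def pE_mono)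

lemma OE_add: "z \<in> OE v \<Longrightarrow> w \<in> OE v \<Longrightarrow> eadd z w \<in> OE v" by (simp add: OE_def pE_add)

lemma OE_diff: "z \<in> OE v \<Longrightarrow> w \<in> OE v \<Longrightarrow> esub z w \<in> OE v" by (simp add: OE_def pE_diff)

lemma pE_mult:
  assumes "z \<in> pE v a" "w \<in> pE v b"
  shows "emul eps z w \<in> pE v (a + b)"
proof -
  have "eps * snd z \<in> pF v a" using pF_mult_OF[OF OF_eps] assms by (simp add: pE_iff)
  then show ?thesis using assms by (auto simp: pE_iff intro!: pF_add pF_mult)
qed

lemma OE_mult: "z \<in> OE v \<Longrightarrow> w \<in> OE v \<Longrightarrow> emul eps z w \<in> OE v"
  using pE_mult[of z 0 w 0] by (simp add: OE_def)

lemma pE_mult_OE: "z \<in> OE v \<Longrightarrow> w \<in> pE v b \<Longrightarrow> emul eps z w \<in> pE v b"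
  using pE_mult[of z 0 w b] by (simp add: OE_def)

lemma pE_mult_OE': "z \<in> pE v b \<Longrightarrow> w \<in> OE v \<Longrightarrow> emul eps z w \<in> pE v b"
  using pE_mult[of z b w 0] by (simp add: OE_def)

lemma OE_e1[simp]: "e1 \<in> OE v" by (simp add: OE_iff)

lemma e1_notin_pE1: "e1 \<notin> pE v 1" by (simp add: pE_iff one_notin_pF)

lemma emb_pE_iff[simp]: "emb x \<in> pE v n \<longleftrightarrow> x \<in> pF v n"
  by (simp add: pE_iff)

lemma emb_OE_iff[simp]: "emb x \<in> OE v \<longleftrightarrow> x \<in> OF v"
  by (simp add: OE_iff)

lemma enorm_pE:
  assumes "z \<in> pE v a"
  shows "enorm eps z \<in> pF v (a + a)"
proof -
  have "eps * snd z \<in> pF v a" using pF_mult_OF[OF OF_eps] assms by (simp add: pE_iff)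
  moreover have "snd z \<in> pF v a" "fst z \<in> pF v a" using assms by (auto simp: pE_iff)
  ultimately have 1: "eps * snd z * snd z \<in> pF v (a + a)" and 2: "fst z * fst z \<in> pF v (a + a)"
    by (metis pF_mult)+
  show ?thesis unfolding enorm_def using pF_diff[OF 2 1] by simp
qed

lemma enorm_OE: "z \<in> OE v \<Longrightarrow> enorm eps z \<in> OF v"
  using enorm_pE[of z 0] by (simp add: OE_def OF_def)

lemma OE_pE1_or_eunit:
  assumes "z \<in> OE v"
  shows "z \<in> pE v 1 \<or> eunit eps v z"
proof (cases "z \<in> pE v 1")
  case False
  have "enorm eps z \<notin> pF v 1"
    using norm_form_pF1_imp[of "fst z" "snd z"] assms False by (auto simp: OE_iff pE_iff enorm_def)
  then show ?thesis using OF_cases[OF enorm_OE[OF assms]] assms by (auto simp: eunit_def)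
qed simp

lemma eunit_notin_pE1:
  assumes "eunit eps v z"
  shows "z \<notin> pE v 1"
proof
  assume "z \<in> pE v 1"
  then have "enorm eps z \<in> pF v 2" using enorm_pE[of z 1] by simp
  then show False using assms by (auto simp: eunit_def pF_def)
qed

lemma eunit_OE: "eunit eps v z \<Longrightarrow> z \<in> OE v" by (simp add: eunit_def)

lemma eunit_ne: "eunit eps v z \<Longrightarrow> z \<noteq> e0" by (auto simp: eunit_def enorm_def)

lemma eunit_iff: "z \<in> OE v \<Longrightarrow> eunit eps v z \<longleftrightarrow> z \<notin> pE v 1"
  using OE_pE1_or_eunit eunit_notin_pE1 by blast

lemma eunit_e1[simp]: "eunit eps v e1" by (simp add: eunit_def v_one)

lemma eunit_mult: "eunit eps v z \<Longrightarrow> eunit eps v w \<Longrightarrow> eunit eps v (emul eps z w)"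
  by (simp add: eunit_def enorm_mult OE_mult vmult)

lemma eunit_conj: "eunit eps v z \<Longrightarrow> eunit eps v (econj z)"
  by (simp add: eunit_def)

lemma einv_OE:
  assumes "eunit eps v z"
  shows "einv eps z \<in> OE v"
proof -
  have i: "inverse (enorm eps z) \<in> OF v" using assms unit_inverse_OF by (simp add: eunit_def)
  have "fst z * inverse (enorm eps z) \<in> OF v" "- snd z * inverse (enorm eps z) \<in> OF v"
    using assms i by (auto simp: eunit_def OE_iff intro!: OF_mult OF_minus)
  then show ?thesis by (simp add: OE_iff divide_inverse)
qed

lemma einv_mult: "eunit eps v z \<Longrightarrow> emul eps z (einv eps z) = e1"
  using emul_einv eunit_ne by blast

lemma einv_mult': "eunit eps v z \<Longrightarrow> emul eps (einv eps z) z = e1"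
  using einv_mult emul_comm by metis

lemma eunit_einv:
  assumes "eunit eps v z"
  shows "eunit eps v (einv eps z)"
proof -
  have "einv eps z \<notin> pE v 1"
  proof
    assume "einv eps z \<in> pE v 1"
    then have "emul eps z (einv eps z) \<in> pE v 1" using pE_mult_OE[OF eunit_OE[OF assms]] by blast
    then show False using einv_mult[OF assms] e1_notin_pE1 by simp
  qed
  then show ?thesis using eunit_iff einv_OE[OF assms] by blast
qed

lemma eunit_add_pE1:
  assumes "eunit eps v z" "w \<in> pE v 1"
  shows "eunit eps v (eadd z w)"
proof -
  have o: "eadd z w \<in> OE v" using OE_add[OF eunit_OE[OF assms(1)] OE_pE[OF _ assms(2)]] by simp
  have "eadd z w \<notin> pE v 1"
  proof
    assume "eadd z w \<in> pE v 1"
    then have "esub (eadd z w) w \<in> pE v 1" using pE_diff assms(2) by blast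
    moreover have "esub (eadd z w) w = z" by (rule prod_eqI) simp_all
    ultimately show False using eunit_notin_pE1[OF assms(1)] by simp
  qed
  then show ?thesis using eunit_iff o by blast
qed

lemma eunit_mult_pE:
  assumes "eunit eps v u"
  shows "emul eps u z \<in> pE v n \<longleftrightarrow> z \<in> pE v n"
proof
  assume "emul eps u z \<in> pE v n"
  then have "emul eps (einv eps u) (emul eps u z) \<in> pE v n" using pE_mult_OE einv_OE[OF assms] by blast
  then show "z \<in> pE v n" using einv_mult'[OF assms] by (simp add: emul_assoc[symmetric])
qed (use pE_mult_OE eunit_OE[OF assms] in blast)

lemma enorm_eq_1_OE:
  assumes "enorm eps z = 1"
  shows "z \<in> OE v"
proof (rule ccontr)
  assume nz: "z \<notin> OE v"
  have key: "False" if a: "a \<noteq> 0" "v a < 0" "fst z / a \<in> OF v" "snd z / a \<in> OF v"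
     "fst z / a \<notin> pF v 1 \<or> snd z / a \<notin> pF v 1" for a
  proof -
    define w where "w = (fst z / a, snd z / a)"
    have wO: "w \<in> OE v" using a by (simp add: w_def OE_iff)
    have "w \<notin> pE v 1" using a by (auto simp: w_def pE_iff)
    then have u: "eunit eps v w" using eunit_iff wO by blast
    have "enorm eps w = enorm eps z / (a * a)" using a(1) by (simp add: w_def enorm_def field_simps)
    then have "enorm eps w = inverse (a * a)" using assms by (simp add: divide_inverse)
    then have "v (enorm eps w) = - (v a + v a)" using a(1) by (simp add: vinv vmult)
    then show False using u a(2) by (simp add: eunit_def)
  qed
  show False
  proof (cases "fst z = 0 \<or> (snd z \<noteq> 0 \<and> v (snd z) \<le> v (fst z))")
    case True
    then have s: "snd z \<noteq> 0" using nz by (auto simp: OE_iff)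
    have vs: "v (snd z) < 0" using nz True s by (auto simp: OE_iff OF_iff)
    have "fst z / snd z \<in> OF v" using True s by (cases "fst z = 0") (auto simp: OF_iff vdiv)
    moreover have "snd z / snd z \<notin> pF v 1" using s one_notin_pF by simp
    ultimately show False using key[of "snd z"] s vs by simp
  next
    case False
    then have f: "fst z \<noteq> 0" by auto
    have vf: "v (fst z) < 0" using nz False f by (auto simp: OE_iff OF_iff)
    have "snd z / fst z \<in> OF v" using False f by (cases "snd z = 0") (auto simp: OF_iff vdiv)
    moreover have "fst z / fst z \<notin> pF v 1" using f one_notin_pF by simp
    ultimately show False using key[of "fst z"] f vf by simp
  qed
qed

lemma enorm_einv: "z \<noteq> e0 \<Longrightarrow> enorm eps (einv eps z) = inverse (enorm eps z)"
  using enorm_mult[of eps z "einv eps z"] emul_einv[of z] enorm_eq_0_iff[of z]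
  by (simp add: field_simps)

lemma eunit_if_enorm_1: "enorm eps l = 1 \<Longrightarrow> eunit eps v l"
  using enorm_eq_1_OE by (simp add: eunit_def v_one)

lemma cancel_einv: "eunit eps v a \<Longrightarrow> emul eps (emul eps a c) (einv eps a) = c"
  by (metis emul_assoc emul_comm einv_mult emul_e1(2))

lemma snd_ratio_OF: "a \<in> OE v \<Longrightarrow> eunit eps v u \<Longrightarrow> snd (emul eps a (einv eps u)) \<in> OF v"
  using OE_mult[OF _ einv_OE] OE_iff by blast

lemma enorm_eunit_OF_units: "eunit eps v z \<Longrightarrow> enorm eps z \<in> OF_units v"
  using enorm_OE unit_notin_pF by (auto simp: OF_units_def eunit_def)

lemma OE_if_near_one: "esub z e1 \<in> pE v n \<Longrightarrow> 0 \<le> n \<Longrightarrow> z \<in> OE v"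
proof -
  assume a: "esub z e1 \<in> pE v n" "0 \<le> n"
  have "eadd (esub z e1) e1 = z" by (rule prod_eqI) simp_all
  then show ?thesis using OE_add[OF OE_pE[OF a(2) a(1)] OE_e1] by simp
qed

lemma eunit_if_near_one: "esub z e1 \<in> pE v 1 \<Longrightarrow> eunit eps v z"
proof -
  assume a: "esub z e1 \<in> pE v 1"
  have "eadd e1 (esub z e1) = z" by (rule prod_eqI) simp_all
  then show ?thesis using eunit_add_pE1[OF eunit_e1 a] by simp
qed

lemma einv_near_one:
  assumes "esub t e1 \<in> pE v n" "eunit eps v t"
  shows "esub (einv eps t) e1 \<in> pE v n"
proof -
  have "emul eps (esub e1 t) z = esub z (emul eps t z)" for z
    by (rule prod_eqI) (simp_all add: algebra_simps)
  then have "esub (einv eps t) e1 = emul eps (esub e1 t) (einv eps t)"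
    using einv_mult[OF assms(2)] by simp
  moreover have "esub e1 t = esub e0 (esub t e1)" by (rule prod_eqI) simp_all
  ultimately show ?thesis
    using pE_mult_OE'[OF pE_diff[OF pE_0 assms(1)] einv_OE[OF assms(2)]] by simp
qed

lemma enorm_add_pE:
  assumes "x \<in> OE v" "e \<in> pE v n" "n \<ge> 0"
  shows "enorm eps (eadd x e) - enorm eps x \<in> pF v n"
proof -
  have "enorm eps (eadd x e) - enorm eps x =
     fst e * (2 * fst x + fst e) - eps * snd e * (2 * snd x + snd e)"
    by (simp add: enorm_def algebra_simps)
  moreover have "2 * fst x + fst e \<in> OF v" "2 * snd x + snd e \<in> OF v"
    using assms OE_pE[OF assms(3) assms(2)] by (auto simp: OE_iff intro!: OF_add OF_mult)
  moreover have "fst e \<in> pF v n" "eps * snd e \<in> pF v n"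
    using assms(2) pF_mult_OF[OF OF_eps] by (auto simp: pE_iff)
  ultimately show ?thesis using pF_mult_OF' pF_diff by metis
qed

lemma one_plus_or_minus_eunit:
  assumes "mu \<in> OE v"
  obtains c where "c * c = 1" "eunit eps v (1 + c * fst mu, c * snd mu)"
proof (cases "eunit eps v (1 + fst mu, snd mu)")
  case True
  then show ?thesis using that[of 1] by simp
next
  case False
  have "(1 + fst mu, snd mu) \<in> OE v" using assms by (simp add: OE_iff OF_add)
  then have p: "(1 + fst mu, snd mu) \<in> pE v 1" using OE_pE1_or_eunit False by blast
  have "(4::'f) \<noteq> 0 \<and> v 4 = 0"
    using two_nz v_two vmult[of 2 2] mult_eq_0_iff[of "2::'f" 2] by simp
  then have two: "eunit eps v (emb 2)" using two_nz by (simp add: eunit_def enorm_def)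
  have "(1 + -1 * fst mu, -1 * snd mu) = eadd (emb 2) (esub e0 (1 + fst mu, snd mu))"
    by (rule prod_eqI) simp_all
  then show ?thesis using that[of "-1"] eunit_add_pE1[OF two pE_diff[OF pE_0 p]] by simp
qed

lemma norm_near_one_decomp:
  assumes mu: "eunit eps v mu" and n: "enorm eps mu - 1 \<in> pF v n"
  shows "\<exists>l s. enorm eps l = 1 \<and> s \<in> pE v n \<and> mu = emul eps l (eadd e1 s)"
proof -
  obtain c where c: "c * c = 1" and wu: "eunit eps v (1 + c * fst mu, c * snd mu)"
    using one_plus_or_minus_eunit[OF eunit_OE[OF mu]] by blast
  define w where "w = (1 + c * fst mu, c * snd mu)"
  define l where "l = emul eps (emb c) (emul eps w (einv eps (econj w)))"
  define s where "s = emul eps (emb (enorm eps mu - 1)) (einv eps w)"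
  have wu: "eunit eps v w" "eunit eps v (econj w)" using wu eunit_conj by (auto simp: w_def)
  have "enorm eps l = c * c * (enorm eps w * inverse (enorm eps w))"
    unfolding l_def enorm_mult using enorm_einv[OF eunit_ne[OF wu(2)]] by (simp add: enorm_def)
  then have "enorm eps l = 1" using wu(1) c by (simp add: eunit_def)
  moreover have "s \<in> pE v n" unfolding s_def using pE_mult_OE'[OF _ einv_OE[OF wu(1)]] n by simp
  moreover have "mu = emul eps l (eadd e1 s)" unfolding l_def s_def
    by (rule cayley_identity[OF c w_def einv_mult[OF wu(1)] einv_mult[OF wu(2)]])
  ultimately show ?thesis by blast
qed

lemma eps_mult_pF1_iff: "z \<in> OF v \<Longrightarrow> eps * z \<in> pF v 1 \<longleftrightarrow> z \<in> pF v 1"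
  using pF1_prime[OF OF_eps, of z] eps_notin_pF1 pF_mult_OF[OF OF_eps, of z 1] by blast

lemma enorm_surj_mod_p:
  assumes u: "u \<in> OF v" "u \<notin> pF v 1"
  shows "\<exists>a\<in>OE v. enorm eps a - u \<in> pF v 1"
proof -
  let ?Sq = "(\<lambda>x. res_class v 1 (x * x)) ` OF v"
  let ?T = "(\<lambda>y. res_class v 1 (u + eps * y * y)) ` OF v"
  have "card ?Sq = card ?T"
  proof (rule card_image_eq_kernel, intro ballI)
    fix x y assume xy: "x \<in> OF v" "y \<in> OF v"
    have o: "x * x \<in> OF v" "y * y \<in> OF v" "u + eps * x * x \<in> OF v" "u + eps * y * y \<in> OF v"
      using xy u by (auto intro!: OF_mult OF_add)
    have "(u + eps * x * x) - (u + eps * y * y) = eps * (x * x - y * y)" by (simp add: algebra_simps)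
    then show "(res_class v 1 (x * x) = res_class v 1 (y * y)) = (res_class v 1 (u + eps * x * x) = res_class v 1 (u + eps * y * y))"
      using res_class_eq_iff[OF o(1,2)] res_class_eq_iff[OF o(3,4)] eps_mult_pF1_iff[OF OF_diff[OF o(1,2)]] by simp
  qed
  have sub: "?Sq \<union> ?T \<subseteq> res_class v 1 ` OF v"
    using u by (auto intro!: OF_mult OF_add)
  have fin: "finite (?Sq \<union> ?T)" using finite_subset[OF sub finite_residue_classes_1] .
  \<comment> \<open>both sets have at least \<open>(q + 1)/2\<close> of the \<open>q\<close> residue classes, so they meet\<close>
  have "?Sq \<inter> ?T \<noteq> {}"
  proof
    assume e: "?Sq \<inter> ?T = {}"
    have "card (?Sq \<union> ?T) = card ?Sq + card ?T"
      using fin e by (simp add: card_Un_disjoint)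
    moreover have "card (?Sq \<union> ?T) \<le> q" using card_mono[OF finite_residue_classes_1 sub] card_residue_field by simp
    ultimately show False using squares_count \<open>card ?Sq = card ?T\<close> by linarith
  qed
  then obtain x y where xy: "x \<in> OF v" "y \<in> OF v" "res_class v 1 (x * x) = res_class v 1 (u + eps * y * y)" by auto
  have o: "x * x \<in> OF v" "u + eps * y * y \<in> OF v"
    using xy u by (auto intro!: OF_mult OF_add)
  have "x * x - (u + eps * y * y) \<in> pF v 1" using res_class_eq_iff[OF o] xy(3) by blast
  moreover have "enorm eps (x, y) - u = x * x - (u + eps * y * y)" by (simp add: enorm_def)
  moreover have "(x, y) \<in> OE v" using xy by (simp add: OE_iff)
  ultimately show ?thesis by metis
qed

lemma enorm_surj_mod_pn:
  assumes u: "u \<in> OF v" "u \<notin> pF v 1"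
  shows "\<exists>a\<in>OE v. enorm eps a - u \<in> pF v (int n)"
proof (induction n)
  case 0 then show ?case using enorm_surj_mod_p[OF u] OF_pF[of 1] by (auto simp: OF_def)
next
  case (Suc n)
  show ?case
  proof (cases "n = 0")
    case True then show ?thesis using enorm_surj_mod_p[OF u] by simp
  next
    case False
    obtain a where a: "a \<in> OE v" "enorm eps a - u \<in> pF v (int n)" using Suc.IH by blast
    have uu: "u \<noteq> 0" "v u = 0" using OF_cases u by auto
    define t where "t = (enorm eps a - u) / u"
    have t: "t \<in> pF v (int n)" unfolding t_def using pF_divide_unit[OF a(2) uu] .
    have tO: "t \<in> OF v" using OF_pF[OF _ t] by simp
    have half: "inverse 2 \<in> OF v" using unit_inverse_OF[OF two_nz v_two] .
    \<comment> \<open>\<open>enorm eps a = u (1 + t)\<close>, so scaling \<open>a\<close> by \<open>1 - t/2\<close> leaves an error of order \<open>t\<^sup>2\<close>\<close>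
    define s where "s = 1 - t * inverse 2"
    have sO: "s \<in> OF v" unfolding s_def using tO half OF_mult OF_diff OF_1 by blast
    have ena: "enorm eps a = u * (1 + t)" using uu by (simp add: t_def field_simps)
    define a' where "a' = (s * fst a, s * snd a)"
    have a'O: "a' \<in> OE v" using a(1) sO by (simp add: a'_def OE_iff OF_mult)
    have "enorm eps a' = s * s * enorm eps a" by (simp add: a'_def enorm_def algebra_simps)
    moreover have f4: "(4::'f) \<noteq> 0" using two_nz mult_eq_0_iff[of "2::'f" 2] by simp
    ultimately have "enorm eps a' - u = u * (t * t) * ((t - 3) * inverse 4)"
      using two_nz unfolding ena s_def by (simp add: field_simps)
    moreover have "t * t \<in> pF v (int n + int n)" using pF_mult[OF t t] .
    moreover have "int n + int n \<ge> int (Suc n)" using False by simp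
    moreover have "(t - 3) * inverse 4 \<in> OF v"
    proof -
      have "(4::'f) = 2 * 2" by simp
      then have "inverse (4::'f) = inverse 2 * inverse 2" by (simp add: mult_inverse_of_nat_commute)
      then show ?thesis using OF_mult[OF OF_diff[OF tO OF_numeral] OF_mult[OF half half]] by simp
    qed
    ultimately have "enorm eps a' - u \<in> pF v (int (Suc n))"
      using pF_mult_OF[OF u(1)] pF_mult_OF' pF_mono by metis
    then show ?thesis using a'O by blast
  qed
qed

end

section \<open>The unitary group and its subgroups\<close>

text \<open>For \<open>g \<in> G\<close> the inverse is \<open>w conj(g)\<^sup>T w\<close>, which is \<open>minv g\<close>.\<close>

definition minv :: "('f::field \<times> 'f) m2 \<Rightarrow> ('f \<times> 'f) m2" where
  "minv g = M2 (econj (m22 g)) (econj (m12 g)) (econj (m21 g)) (econj (m11 g))"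

definition entries_in :: "'a m2 \<Rightarrow> 'a set \<Rightarrow> bool" where
  "entries_in g P \<longleftrightarrow> m11 g \<in> P \<and> m12 g \<in> P \<and> m21 g \<in> P \<and> m22 g \<in> P"

lemmas E_defs = eadd_def esub_def emul_def econj_def e0_def e1_def esqrt_def emb_def enorm_def

lemma mmul_assoc: "mmul eps (mmul eps x y) z = mmul eps x (mmul eps y z)"
  by (simp add: mmul_def emul_def eadd_def algebra_simps)

lemma mmul_mI[simp]: "mmul eps mI g = g" "mmul eps g mI = g"
  by (cases g; simp add: mmul_def mI_def)+

lemma mct_mmul: "mct (mmul eps g h) = mmul eps (mct h) (mct g)"
  by (simp add: mmul_def mct_def emul_def eadd_def econj_def algebra_simps)

lemma mdet_mmul: "mdet eps (mmul eps g h) = emul eps (mdet eps g) (mdet eps h)"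
  by (rule prod_eqI) (simp_all add: mdet_def mmul_def algebra_simps)

definition scalar_m2 :: "'f::field \<times> 'f \<Rightarrow> ('f \<times> 'f) m2" where "scalar_m2 l = M2 l e0 e0 l"

definition upper_m2 :: "'f::field \<Rightarrow> ('f \<times> 'f) m2" where "upper_m2 b = M2 e1 (0, b) e0 e1"

definition lower_m2 :: "'f::field \<times> 'f \<Rightarrow> ('f \<times> 'f) m2" where "lower_m2 c = M2 e1 e0 c e1"

lemma scalar_m2_sel[simp]: "m11 (scalar_m2 l) = l" "m12 (scalar_m2 l) = e0" "m21 (scalar_m2 l) = e0" "m22 (scalar_m2 l) = l"
  by (simp_all add: scalar_m2_def)

lemma upper_m2_sel[simp]: "m11 (upper_m2 b) = e1" "m12 (upper_m2 b) = (0, b)" "m21 (upper_m2 b) = e0" "m22 (upper_m2 b) = e1"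
  by (simp_all add: upper_m2_def)

lemma lower_m2_sel[simp]: "m11 (lower_m2 c) = e1" "m12 (lower_m2 c) = e0" "m21 (lower_m2 c) = c" "m22 (lower_m2 c) = e1"
  by (simp_all add: lower_m2_def)

lemma mI_sel[simp]: "m11 mI = e1" "m12 mI = e0" "m21 mI = e0" "m22 mI = e1"
  by (simp_all add: mI_def)

lemma mmul_sel[simp]:
  "m11 (mmul eps g h) = eadd (emul eps (m11 g) (m11 h)) (emul eps (m12 g) (m21 h))"
  "m12 (mmul eps g h) = eadd (emul eps (m11 g) (m12 h)) (emul eps (m12 g) (m22 h))"
  "m21 (mmul eps g h) = eadd (emul eps (m21 g) (m11 h)) (emul eps (m22 g) (m21 h))"
  "m22 (mmul eps g h) = eadd (emul eps (m21 g) (m12 h)) (emul eps (m22 g) (m22 h))"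
  by (simp_all add: mmul_def)

lemma msub_sel[simp]:
  "m11 (msub g h) = esub (m11 g) (m11 h)" "m12 (msub g h) = esub (m12 g) (m12 h)"
  "m21 (msub g h) = esub (m21 g) (m21 h)" "m22 (msub g h) = esub (m22 g) (m22 h)"
  by (simp_all add: msub_def)

lemma minv_sel[simp]:
  "m11 (minv g) = econj (m22 g)" "m12 (minv g) = econj (m12 g)"
  "m21 (minv g) = econj (m21 g)" "m22 (minv g) = econj (m11 g)"
  by (simp_all add: minv_def)

lemma scalar_m2_comm: "mmul eps (scalar_m2 l) g = mmul eps g (scalar_m2 l)"
  by (rule m2.expand) (simp_all add: emul_comm)

lemma scalar_m2_mult: "mmul eps (scalar_m2 l) (scalar_m2 l') = scalar_m2 (emul eps l l')"
  by (rule m2.expand) simp_all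

lemma scalar_m2_e1: "scalar_m2 e1 = mI" by (simp add: scalar_m2_def mI_def)

lemma upper_m2_mult: "mmul eps (upper_m2 b) (upper_m2 b') = upper_m2 (b + b')"
  by (rule m2.expand) (simp_all add: prod_eq_iff)

lemma upper_m2_0: "upper_m2 0 = mI" by (simp add: upper_m2_def mI_def e0_def)

lemma upper_m2_cancel: "mmul eps (upper_m2 b) (mmul eps (upper_m2 (- b)) X) = X"
  by (simp add: mmul_assoc[symmetric] upper_m2_mult upper_m2_0)

lemma scalar_upper_J_mult:
  "mmul eps (mmul eps (scalar_m2 l1) (mmul eps (upper_m2 b1) j1)) (mmul eps (scalar_m2 l2) (mmul eps (upper_m2 b2) j2))
   = mmul eps (scalar_m2 (emul eps l1 l2))
       (mmul eps (upper_m2 (b1 + b2)) (mmul eps (mmul eps (mmul eps (upper_m2 (- b2)) j1) (upper_m2 b2)) j2))"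
proof -
  have zc: "mmul eps (scalar_m2 l) (mmul eps g Y) = mmul eps g (mmul eps (scalar_m2 l) Y)" for l g Y
    by (metis mmul_assoc scalar_m2_comm)
  have "mmul eps (mmul eps (scalar_m2 l1) (mmul eps (upper_m2 b1) j1)) (mmul eps (scalar_m2 l2) (mmul eps (upper_m2 b2) j2))
      = mmul eps (scalar_m2 l1) (mmul eps (scalar_m2 l2) (mmul eps (upper_m2 b1) (mmul eps j1 (mmul eps (upper_m2 b2) j2))))"
    by (simp add: mmul_assoc zc[of l2 j1, symmetric] zc[of l2 "upper_m2 b1", symmetric])
  also have "\<dots> = mmul eps (scalar_m2 (emul eps l1 l2))
       (mmul eps (upper_m2 (b1 + b2)) (mmul eps (mmul eps (mmul eps (upper_m2 (- b2)) j1) (upper_m2 b2)) j2))"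
  proof -
    have "mmul eps (upper_m2 (b1 + b2)) (mmul eps (upper_m2 (- b2)) X) = mmul eps (upper_m2 b1) X" for X
      by (simp add: mmul_assoc[symmetric] upper_m2_mult)
    then show ?thesis by (simp add: mmul_assoc scalar_m2_mult[symmetric])
  qed
  finally show ?thesis .
qed

lemma Ugrp_eq: "Ugrp eps v = upper_m2 ` OF v"
proof -
  have "emul eps esqrt (emb b) = (0, b)" for b :: 'a by (rule prod_eqI) simp_all
  then show ?thesis by (auto simp: Ugrp_def upper_m2_def)
qed

definition ceil_half :: "nat \<Rightarrow> int" where "ceil_half d = int ((d + 1) div 2)"

lemma ceil_half_add: "ceil_half d + ceil_half (Suc d) = int d + 1" by (simp add: ceil_half_def)

lemma ceil_half_ge1: "d \<ge> 1 \<Longrightarrow> ceil_half d \<ge> 1" by (simp add: ceil_half_def)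

lemma ceil_half_Suc_ge1: "ceil_half (Suc d) \<ge> 1" by (simp add: ceil_half_def)

lemma ceil_half_le: "ceil_half d \<le> ceil_half (Suc d)" by (simp add: ceil_half_def)

lemma J_iff: "g \<in> Jgrp eps v d \<longleftrightarrow> g \<in> Ggrp eps \<and> esub (m11 g) e1 \<in> pE v (ceil_half d) \<and>
  esub (m22 g) e1 \<in> pE v (ceil_half d) \<and> m12 g \<in> pE v (ceil_half d) \<and> m21 g \<in> pE v (ceil_half (Suc d))"
  by (simp add: Jgrp_def ceil_half_def)

context unramified_quadratic
begin

lemma mdet_mult_ne: "mdet eps g \<noteq> e0 \<Longrightarrow> mdet eps h \<noteq> e0 \<Longrightarrow> mdet eps (mmul eps g h) \<noteq> e0"
  by (simp add: mdet_mmul emul_nonzero)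

lemma G_iff: "M2 (a1,a2) (b1,b2) (c1,c2) (d1,d2) \<in> Ggrp eps \<longleftrightarrow>
   mdet eps (M2 (a1,a2) (b1,b2) (c1,c2) (d1,d2)) \<noteq> e0 \<and>
   a1*c1 - eps*a2*c2 = 0 \<and> b1*d1 - eps*b2*d2 = 0 \<and>
   a1*d1 - eps*a2*d2 + c1*b1 - eps*c2*b2 = 1 \<and> a1*d2 - a2*d1 + c1*b2 - c2*b1 = 0"
proof -
  have t: "(2::'f) * x = 0 \<longleftrightarrow> x = 0" for x using two_nz by simp
  show ?thesis
    unfolding Ggrp_def mmul_def mct_def mw_def
    by (simp add: E_defs algebra_simps t[simplified algebra_simps] prod_eq_iff two_nz) (auto simp: algebra_simps two_nz)
qed

lemma G_relations:
  assumes "g \<in> Ggrp eps"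
  shows "fst (m11 g) * fst (m21 g) - eps * snd (m11 g) * snd (m21 g) = 0"
    "fst (m12 g) * fst (m22 g) - eps * snd (m12 g) * snd (m22 g) = 0"
    "fst (m11 g) * fst (m22 g) - eps * snd (m11 g) * snd (m22 g) + fst (m21 g) * fst (m12 g) - eps * snd (m21 g) * snd (m12 g) = 1"
    "fst (m11 g) * snd (m22 g) - snd (m11 g) * fst (m22 g) + fst (m21 g) * snd (m12 g) - snd (m21 g) * fst (m12 g) = 0"
    "fst (m21 g) * fst (m22 g) - eps * snd (m21 g) * snd (m22 g) = 0"
proof -
  obtain a1 a2 b1 b2 c1 c2 d1 d2 where gg: "g = M2 (a1,a2) (b1,b2) (c1,c2) (d1,d2)"
    by (metis m2.exhaust prod.exhaust)
  have r: "a1*c1 - eps*a2*c2 = 0" "b1*d1 - eps*b2*d2 = 0"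
   "a1*d1 - eps*a2*d2 + c1*b1 - eps*c2*b2 = 1" "a1*d2 - a2*d1 + c1*b2 - c2*b1 = 0"
    using assms G_iff unfolding gg by blast+
  have "c1*d1 - eps*c2*d2 = 0" using r by algebra
  with r show "fst (m11 g) * fst (m21 g) - eps * snd (m11 g) * snd (m21 g) = 0"
    "fst (m12 g) * fst (m22 g) - eps * snd (m12 g) * snd (m22 g) = 0"
    "fst (m11 g) * fst (m22 g) - eps * snd (m11 g) * snd (m22 g) + fst (m21 g) * fst (m12 g) - eps * snd (m21 g) * snd (m12 g) = 1"
    "fst (m11 g) * snd (m22 g) - snd (m11 g) * fst (m22 g) + fst (m21 g) * snd (m12 g) - snd (m21 g) * fst (m12 g) = 0"
    "fst (m21 g) * fst (m22 g) - eps * snd (m21 g) * snd (m22 g) = 0"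
    unfolding gg by simp_all
qed

lemma G_mult:
  assumes "g \<in> Ggrp eps" "h \<in> Ggrp eps"
  shows "mmul eps g h \<in> Ggrp eps"
proof -
  have g: "mdet eps g \<noteq> e0" "mmul eps (mct g) (mmul eps mw g) = mw" using assms(1) by (auto simp: Ggrp_def)
  have h: "mdet eps h \<noteq> e0" "mmul eps (mct h) (mmul eps mw h) = mw" using assms(2) by (auto simp: Ggrp_def)
  have "mmul eps (mct (mmul eps g h)) (mmul eps mw (mmul eps g h)) =
        mmul eps (mct h) (mmul eps (mmul eps (mct g) (mmul eps mw g)) h)"
    by (simp add: mct_mmul mmul_assoc)
  also have "\<dots> = mw" using g h by simp
  finally show ?thesis using mdet_mult_ne[OF g(1) h(1)] by (simp add: Ggrp_def)
qed

lemma minv_G: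
  assumes "g \<in> Ggrp eps"
  shows "mmul eps (minv g) g = mI" "mmul eps g (minv g) = mI" "minv g \<in> Ggrp eps"
proof -
  obtain a1 a2 b1 b2 c1 c2 d1 d2 where gg: "g = M2 (a1,a2) (b1,b2) (c1,c2) (d1,d2)"
    by (metis m2.exhaust prod.exhaust)
  have r: "a1*c1 - eps*a2*c2 = 0" "b1*d1 - eps*b2*d2 = 0"
   "a1*d1 - eps*a2*d2 + c1*b1 - eps*c2*b2 = 1" "a1*d2 - a2*d1 + c1*b2 - c2*b1 = 0"
    using assms G_iff unfolding gg by blast+
  show "mmul eps (minv g) g = mI"
    unfolding gg minv_def mmul_def mI_def E_defs using r by simp (intro conjI; algebra)
  show "mmul eps g (minv g) = mI"
    unfolding gg minv_def mmul_def mI_def E_defs using r by simp (intro conjI; algebra)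
  have "mdet eps (minv g) = econj (mdet eps g)"
    unfolding gg minv_def mdet_def E_defs by (simp add: algebra_simps)
  moreover have "mdet eps g \<noteq> e0" using assms by (simp add: Ggrp_def)
  ultimately have "mdet eps (minv g) \<noteq> e0" by (auto simp: e0_def econj_def prod_eq_iff)
  moreover have "c1*d1 - eps*c2*d2 = 0" using r by algebra
  moreover have "a1*b1 - eps*a2*b2 = 0" using r by algebra
  moreover have "d2*a1 - d1*a2 - c1*b2 + c2*b1 = 0" using r by algebra
  ultimately show "minv g \<in> Ggrp eps"
    unfolding gg minv_def using r by (simp add: econj_def G_iff algebra_simps)
qed

lemma mI_G: "mI \<in> Ggrp eps"
  unfolding mI_def e1_def e0_def by (simp add: G_iff mdet_def prod_eq_iff)

lemma entries_in_mult:
  assumes "entries_in x (pE v a)" "entries_in y (pE v b)"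
  shows "entries_in (mmul eps x y) (pE v (a + b))"
  using assms unfolding entries_in_def mmul_def by (auto intro!: pE_add pE_mult)

lemma entries_in_OE_mult: "entries_in x (OE v) \<Longrightarrow> entries_in y (OE v) \<Longrightarrow> entries_in (mmul eps x y) (OE v)"
  using entries_in_mult[of x 0 y 0] by (simp add: OE_def)

lemma entries_in_minv_OE: "entries_in g (OE v) \<Longrightarrow> entries_in (minv g) (OE v)"
  by (simp add: entries_in_def minv_def)

lemma msub_conj: "msub (mmul eps (mmul eps k g) k') (mmul eps (mmul eps k mI) k') =
   mmul eps (mmul eps k (msub g mI)) k'"
  by (simp add: msub_def mmul_def mI_def E_defs algebra_simps)

lemma K_iff: "g \<in> Kgrp eps v \<longleftrightarrow> g \<in> Ggrp eps \<and> entries_in g (OE v)"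
  by (simp add: Kgrp_def entries_in_def)

lemma Kn_iff: "g \<in> Kn eps v n \<longleftrightarrow> g \<in> Kgrp eps v \<and> entries_in (msub g mI) (pE v (int n))"
  by (simp add: Kn_def entries_in_def Let_def)

lemma K_entries: "k \<in> Kgrp eps v \<Longrightarrow> m11 k \<in> OE v \<and> m12 k \<in> OE v \<and> m21 k \<in> OE v \<and> m22 k \<in> OE v"
  by (simp add: K_iff entries_in_def)

lemma K_mult: "g \<in> Kgrp eps v \<Longrightarrow> h \<in> Kgrp eps v \<Longrightarrow> mmul eps g h \<in> Kgrp eps v"
  by (simp add: K_iff G_mult entries_in_OE_mult)

lemma K_minv: "g \<in> Kgrp eps v \<Longrightarrow> minv g \<in> Kgrp eps v"
  by (simp add: K_iff minv_G entries_in_minv_OE)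

lemma K_G: "g \<in> Kgrp eps v \<Longrightarrow> g \<in> Ggrp eps" by (simp add: K_iff)

lemma Kn_normal:
  assumes k: "k \<in> Kgrp eps v" and k': "k' \<in> Kgrp eps v" and kk: "mmul eps k k' = mI"
    and g: "g \<in> Kn eps v n"
  shows "mmul eps (mmul eps k g) k' \<in> Kn eps v n"
proof -
  have gK: "g \<in> Kgrp eps v" using g by (simp add: Kn_iff)
  have "entries_in (mmul eps (mmul eps k (msub g mI)) k') (pE v (0 + int n + 0))"
    by (rule entries_in_mult[OF entries_in_mult]) (use k k' g in \<open>auto simp: K_iff Kn_iff OE_def\<close>)
  then have "entries_in (msub (mmul eps (mmul eps k g) k') mI) (pE v (int n))"
    using msub_conj[of k g k'] kk by simp
  then show ?thesis using K_mult[OF K_mult[OF k gK] k'] by (simp add: Kn_iff)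
qed

lemma Kn_mono: "n \<le> n' \<Longrightarrow> g \<in> Kn eps v n' \<Longrightarrow> g \<in> Kn eps v n"
  by (auto simp: Kn_iff entries_in_def intro: pE_mono[of "int n" "int n'"])

lemma scalar_m2_G: "scalar_m2 l \<in> Ggrp eps \<longleftrightarrow> enorm eps l = 1"
proof -
  obtain a b where l: "l = (a, b)" by (cases l)
  have "mdet eps (scalar_m2 l) = emul eps l l" by (rule prod_eqI) (simp_all add: mdet_def scalar_m2_def)
  moreover have "enorm eps l = 1 \<Longrightarrow> emul eps l l \<noteq> e0"
    using emul_nonzero[of l l] enorm_eq_0_iff[of l] by auto
  ultimately show ?thesis unfolding scalar_m2_def l e0_def
    by (auto simp: G_iff enorm_def algebra_simps e0_def)
qed

lemma Zgrp_eq: "Zgrp eps = scalar_m2 ` {l. enorm eps l = 1}"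
  using scalar_m2_G by (auto simp: Zgrp_def scalar_m2_def[symmetric])

lemma scalar_m2_K: "enorm eps l = 1 \<Longrightarrow> scalar_m2 l \<in> Kgrp eps v"
  using scalar_m2_G enorm_eq_1_OE by (simp add: K_iff entries_in_def)

lemma upper_m2_G: "upper_m2 b \<in> Ggrp eps"
  by (simp add: upper_m2_def e1_def e0_def G_iff mdet_def prod_eq_iff)

lemma upper_m2_K: "b \<in> OF v \<Longrightarrow> upper_m2 b \<in> Kgrp eps v"
  using upper_m2_G by (simp add: K_iff entries_in_def OE_iff)

lemma scalar_m2_Kn1:
  assumes "enorm eps r = 1" "esub r e1 \<in> pE v 1"
  shows "scalar_m2 r \<in> Zgrp eps \<inter> Kn eps v 1"
  using scalar_m2_K[OF assms(1)] scalar_m2_G assms Zgrp_eq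
  by (auto simp: Kn_iff entries_in_def)

lemma pE_ceil_half_1: "d \<ge> 1 \<Longrightarrow> z \<in> pE v (ceil_half d) \<Longrightarrow> z \<in> pE v 1"
  using ceil_half_ge1 pE_mono by blast

lemma pE_ceil_half_Suc_1: "z \<in> pE v (ceil_half (Suc d)) \<Longrightarrow> z \<in> pE v 1"
  using ceil_half_Suc_ge1 pE_mono by blast

lemma pE_ceil_half_OE: "z \<in> pE v (ceil_half d) \<Longrightarrow> z \<in> OE v"
  using OE_pE[of "ceil_half d"] by (simp add: ceil_half_def)

lemma pE_ceil_half_Suc_ceil_half: "z \<in> pE v (ceil_half (Suc d)) \<Longrightarrow> z \<in> pE v (ceil_half d)"
  using ceil_half_le pE_mono by blast

lemma pE_mult_ceil_halves:
  "z \<in> pE v (ceil_half d) \<Longrightarrow> w \<in> pE v (ceil_half (Suc d)) \<Longrightarrow> emul eps z w \<in> pE v (int d + 1)"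
  using pE_mult ceil_half_add by metis

lemma pE_mult_ceil_halves_swap:
  "z \<in> pE v (ceil_half (Suc d)) \<Longrightarrow> w \<in> pE v (ceil_half d) \<Longrightarrow> emul eps z w \<in> pE v (int d + 1)"
  using pE_mult ceil_half_add by (metis add.commute)

lemma J_K:
  assumes "j \<in> Jgrp eps v d"
  shows "j \<in> Kgrp eps v"
  using assms OE_if_near_one[of "m11 j" "ceil_half d"] OE_if_near_one[of "m22 j" "ceil_half d"]
    pE_ceil_half_OE[of "m12 j" d] pE_ceil_half_OE[of "m21 j" "Suc d"]
  by (auto simp: J_iff K_iff entries_in_def ceil_half_def)

lemma J_mult:
  assumes "d \<ge> 1" "j1 \<in> Jgrp eps v d" "j2 \<in> Jgrp eps v d"
  shows "mmul eps j1 j2 \<in> Jgrp eps v d"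
proof -
  have O1: "entries_in j1 (OE v)" "entries_in j2 (OE v)" using J_K assms by (auto simp: K_iff)
  note j1 = assms(2)[unfolded J_iff] and j2 = assms(3)[unfolded J_iff]
  have i11: "esub (m11 (mmul eps j1 j2)) e1 =
     eadd (eadd (emul eps (esub (m11 j1) e1) (m11 j2)) (esub (m11 j2) e1)) (emul eps (m12 j1) (m21 j2))"
    by (rule prod_eqI) (simp_all add: algebra_simps)
  have i22: "esub (m22 (mmul eps j1 j2)) e1 =
     eadd (eadd (emul eps (esub (m22 j1) e1) (m22 j2)) (esub (m22 j2) e1)) (emul eps (m21 j1) (m12 j2))"
    by (rule prod_eqI) (simp_all add: algebra_simps)
  have "esub (m11 (mmul eps j1 j2)) e1 \<in> pE v (ceil_half d)"
    unfolding i11 using j1 j2 O1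
    by (intro pE_add pE_mult_OE' pE_mult_OE) (auto simp: entries_in_def intro: pE_ceil_half_OE)
  moreover have "esub (m22 (mmul eps j1 j2)) e1 \<in> pE v (ceil_half d)"
    unfolding i22 using j1 j2 O1
    by (intro pE_add pE_mult_OE' pE_mult_OE) (auto simp: entries_in_def intro: pE_ceil_half_OE)
  moreover have "m12 (mmul eps j1 j2) \<in> pE v (ceil_half d)"
    using j1 j2 O1 by (simp, intro pE_add pE_mult_OE' pE_mult_OE) (auto simp: entries_in_def)
  moreover have "m21 (mmul eps j1 j2) \<in> pE v (ceil_half (Suc d))"
    using j1 j2 O1 by (simp, intro pE_add pE_mult_OE' pE_mult_OE) (auto simp: entries_in_def)
  ultimately show ?thesis using G_mult j1 j2 by (simp add: J_iff)
qed

lemma J_conj_upper: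
  assumes "j \<in> Jgrp eps v d" "b \<in> OF v"
  shows "mmul eps (mmul eps (upper_m2 (- b)) j) (upper_m2 b) \<in> Jgrp eps v d"
    "m21 (mmul eps (mmul eps (upper_m2 (- b)) j) (upper_m2 b)) = m21 j"
proof -
  note jj = assms(1)[unfolded J_iff]
  have O1: "entries_in j (OE v)" using J_K assms by (auto simp: K_iff)
  have x: "((0::'f), b) \<in> OE v" "((0::'f), - b) \<in> OE v" using assms(2) by (auto simp: OE_iff intro: OF_minus)
  let ?g = "mmul eps (mmul eps (upper_m2 (- b)) j) (upper_m2 b)"
  have i11: "esub (m11 ?g) e1 = eadd (esub (m11 j) e1) (emul eps (0, - b) (m21 j))"
    by (rule prod_eqI) (simp_all add: algebra_simps)
  have i22: "esub (m22 ?g) e1 = eadd (esub (m22 j) e1) (emul eps (m21 j) (0, b))"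
    by (rule prod_eqI) (simp_all add: algebra_simps)
  have i12: "m12 ?g = eadd (eadd (emul eps (0, b) (esub (m11 j) e1)) (emul eps (0, - b) (esub (m22 j) e1)))
     (eadd (m12 j) (emul eps (emul eps (0, - b) (m21 j)) (0, b)))"
    by (rule prod_eqI) (simp_all add: algebra_simps)
  show "m21 ?g = m21 j" by (rule prod_eqI) simp_all
  have "esub (m11 ?g) e1 \<in> pE v (ceil_half d)" unfolding i11 using jj x
    by (intro pE_add pE_mult_OE) (auto intro: pE_ceil_half_Suc_ceil_half)
  moreover have "esub (m22 ?g) e1 \<in> pE v (ceil_half d)" unfolding i22 using jj x
    by (intro pE_add pE_mult_OE') (auto intro: pE_ceil_half_Suc_ceil_half)
  moreover have "m12 ?g \<in> pE v (ceil_half d)" unfolding i12 using jj x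
    by (intro pE_add pE_mult_OE pE_mult_OE' OE_mult) (auto intro: pE_ceil_half_Suc_ceil_half)
  moreover have "m21 ?g \<in> pE v (ceil_half (Suc d))" using jj \<open>m21 ?g = m21 j\<close> by simp
  moreover have "?g \<in> Ggrp eps" using G_mult[OF G_mult[OF upper_m2_G jj[THEN conjunct1]] upper_m2_G] .
  ultimately show "?g \<in> Jgrp eps v d" by (simp add: J_iff)
qed

lemma lower_m2_J:
  assumes d: "d \<ge> 1" and c: "c \<in> pE v (int d)" and c1: "fst c = 0"
  shows "lower_m2 c \<in> Jgrp eps v d"
proof -
  obtain c2 where cc: "c = (0, c2)" using c1 by (metis prod.collapse)
  have G: "lower_m2 c \<in> Ggrp eps" unfolding lower_m2_def cc e1_def e0_def
    by (simp add: G_iff mdet_def prod_eq_iff)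
  have "int d \<ge> ceil_half (Suc d)" by (simp add: ceil_half_def) (use d in linarith)
  then have "c \<in> pE v (ceil_half (Suc d))" using pE_mono c by blast
  moreover have "esub e1 e1 = (e0 :: 'f \<times> 'f)" by (rule prod_eqI) simp_all
  ultimately show ?thesis using G by (simp add: J_iff)
qed

lemma lower_m2_Kn:
  assumes "c \<in> pE v (int n)" "fst c = 0"
  shows "lower_m2 c \<in> Kn eps v n"
proof -
  obtain c2 where cc: "c = (0, c2)" using assms(2) by (metis prod.collapse)
  have G: "lower_m2 c \<in> Ggrp eps" unfolding lower_m2_def cc e1_def e0_def
    by (simp add: G_iff mdet_def prod_eq_iff)
  have "esub e1 e1 = (e0 :: 'f \<times> 'f)" by (rule prod_eqI) simp_all
  then show ?thesis using G assms OE_pE[of "int n"]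
    by (simp add: Kn_iff K_iff entries_in_def)
qed

lemma Kn_Suc_J:
  assumes d: "d \<ge> 1" and g: "g \<in> Kn eps v (d + 1)"
  shows "g \<in> Jgrp eps v d"
proof -
  have a: "int (d + 1) \<ge> ceil_half d" "int (d + 1) \<ge> ceil_half (Suc d)" by (simp_all add: ceil_half_def)
  have "esub (m11 g) e1 \<in> pE v (int (d+1))" "esub (m22 g) e1 \<in> pE v (int (d+1))"
    "esub (m12 g) e0 \<in> pE v (int (d+1))" "esub (m21 g) e0 \<in> pE v (int (d+1))"
    using g by (simp_all add: Kn_iff entries_in_def)
  moreover have "esub z e0 = z" for z :: "'f \<times> 'f" by simp
  ultimately show ?thesis using g a pE_mono[of "ceil_half d" "int (d+1)"] pE_mono[of "ceil_half (Suc d)" "int (d+1)"]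
    by (auto simp: J_iff Kn_iff K_iff)
qed

lemma K_bottom_row_unit:
  assumes k: "k \<in> Kgrp eps v"
  shows "m21 k \<notin> pE v 1 \<or> m22 k \<notin> pE v 1"
proof (rule ccontr)
  assume "\<not> (m21 k \<notin> pE v 1 \<or> m22 k \<notin> pE v 1)"
  then have p: "m21 k \<in> pE v 1" "m22 k \<in> pE v 1" by auto
  have O: "m11 k \<in> OE v" "m12 k \<in> OE v" using K_entries[OF k] by auto
  have "eadd (emul eps (econj (m11 k)) (m22 k)) (emul eps (econj (m21 k)) (m12 k)) \<in> pE v 1"
    using p O by (intro pE_add pE_mult_OE pE_mult_OE') auto
  then have "fst (eadd (emul eps (econj (m11 k)) (m22 k)) (emul eps (econj (m21 k)) (m12 k))) \<in> pF v 1"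
    by (simp add: pE_iff)
  moreover have "fst (eadd (emul eps (econj (m11 k)) (m22 k)) (emul eps (econj (m21 k)) (m12 k))) = 1"
    using G_relations(3)[OF K_G[OF k]] by (simp add: algebra_simps)
  ultimately show False using one_notin_pF by simp
qed

lemma fst_ratio_eq_0:
  assumes "fst b * fst t - eps * snd b * snd t = 0"
  shows "fst (emul eps b (einv eps t)) = 0"
proof -
  have "fst (emul eps b (einv eps t)) = (fst b * fst t - eps * snd b * snd t) / enorm eps t"
    by (simp add: diff_divide_distrib add_divide_distrib)
  then show ?thesis using assms by simp
qed

lemma ZUJ_iff: "h \<in> ZUJ eps v d \<longleftrightarrow> (\<exists>l b j. enorm eps l = 1 \<and> b \<in> OF v \<and> j \<in> Jgrp eps v d \<and>
   h = mmul eps (scalar_m2 l) (mmul eps (upper_m2 b) j))"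
  unfolding ZUJ_def Zgrp_eq Ugrp_eq by blast

lemma ZUJ_K: "h \<in> ZUJ eps v d \<Longrightarrow> h \<in> Kgrp eps v"
  unfolding ZUJ_iff using scalar_m2_K upper_m2_K J_K K_mult by blast

lemma ZUJ_bottom_row:
  assumes "h \<in> ZUJ eps v d"
  shows "m21 h \<in> pE v (ceil_half (Suc d))"
    "\<exists>l t. enorm eps l = 1 \<and> esub t e1 \<in> pE v (ceil_half d) \<and> m22 h = emul eps l t"
proof -
  obtain l b j where h: "enorm eps l = 1" "b \<in> OF v" "j \<in> Jgrp eps v d"
    "h = mmul eps (scalar_m2 l) (mmul eps (upper_m2 b) j)" using assms ZUJ_iff by blast
  have lO: "l \<in> OE v" using enorm_eq_1_OE h(1) .
  have e: "m21 h = emul eps l (m21 j)" "m22 h = emul eps l (m22 j)" using h(4) by simp_all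
  show "m21 h \<in> pE v (ceil_half (Suc d))" using e h(3) lO pE_mult_OE by (auto simp: J_iff)
  show "\<exists>l t. enorm eps l = 1 \<and> esub t e1 \<in> pE v (ceil_half d) \<and> m22 h = emul eps l t"
    using e h(1,3) by (intro exI[of _ l] exI[of _ "m22 j"]) (auto simp: J_iff)
qed

lemma J_if_bottom_row:
  assumes d: "d \<ge> 1" and g: "g \<in> Kgrp eps v" "m21 g \<in> pE v (ceil_half (Suc d))"
    "esub (m22 g) e1 \<in> pE v (ceil_half d)"
  shows "\<exists>b\<in>OF v. mmul eps (upper_m2 (- b)) g \<in> Jgrp eps v d"
proof -
  define t where "t = m22 g"
  have tu: "eunit eps v t" using eunit_if_near_one pE_ceil_half_1[OF d g(3)] by (simp add: t_def)
  define x where "x = emul eps (m12 g) (einv eps t)"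
  have xO: "x \<in> OE v" unfolding x_def using g(1) einv_OE[OF tu] OE_mult by (auto simp: K_iff entries_in_def)
  have "fst x = 0" unfolding x_def t_def using G_relations(2)[OF K_G[OF g(1)]] by (intro fst_ratio_eq_0) simp
  then have x: "x = (0, snd x)" by (simp add: prod_eq_iff)
  define j where "j = mmul eps (upper_m2 (- snd x)) g"
  have jG: "j \<in> Ggrp eps" unfolding j_def using G_mult[OF upper_m2_G K_G[OF g(1)]] .
  have "emul eps x t = m12 g" unfolding x_def by (simp add: emul_assoc einv_mult'[OF tu])
  then have j12: "m12 j = e0" unfolding j_def t_def using x by (auto simp: prod_eq_iff)
  have j22: "m22 j = t" and j21: "m21 j = m21 g" unfolding j_def t_def by simp_all
  have "emul eps (econj (m11 j)) t = e1"
    using G_relations(3,4)[OF jG] j12 j22 by (intro prod_eqI) (simp_all add: algebra_simps)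
  then have "econj (m11 j) = einv eps t"
    using cancel_einv[OF tu, of "econj (m11 j)"] by (simp add: emul_comm)
  then have "esub (m11 j) e1 = econj (esub (einv eps t) e1)" by (simp add: prod_eq_iff)
  then have "esub (m11 j) e1 \<in> pE v (ceil_half d)"
    using einv_near_one[OF _ tu] g(3) by (simp add: t_def)
  then have "j \<in> Jgrp eps v d" unfolding J_iff using jG j12 j22 j21 g t_def by simp
  then show ?thesis unfolding j_def using xO by (auto simp: OE_iff)
qed

lemma ZUJ_if_bottom_row:
  assumes d: "d \<ge> 1" and g: "g \<in> Kgrp eps v" "m21 g \<in> pE v (ceil_half (Suc d))"
    and l: "enorm eps l = 1" and t: "esub t e1 \<in> pE v (ceil_half d)" "m22 g = emul eps l t"
  shows "g \<in> ZUJ eps v d"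
proof -
  define g' where "g' = mmul eps (scalar_m2 (econj l)) g"
  have lc: "enorm eps (econj l) = 1" using l by simp
  have g'K: "g' \<in> Kgrp eps v" unfolding g'_def using K_mult[OF scalar_m2_K[OF lc] g(1)] .
  have "m21 g' \<in> pE v (ceil_half (Suc d))"
    using pE_mult_OE[OF enorm_eq_1_OE[OF lc] g(2)] by (simp add: g'_def)
  moreover have "m22 g' = t"
    unfolding g'_def using t(2) by (simp add: emul_assoc[symmetric] emul_conj_self_eq_1' l)
  ultimately obtain b where b: "b \<in> OF v" "mmul eps (upper_m2 (- b)) g' \<in> Jgrp eps v d"
    using J_if_bottom_row[OF d g'K] t(1) by auto
  have "g = mmul eps (scalar_m2 l) (mmul eps (upper_m2 b) (mmul eps (upper_m2 (- b)) g'))"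
    unfolding upper_m2_cancel g'_def
    by (simp add: mmul_assoc[symmetric] scalar_m2_mult emul_conj_self_eq_1 l scalar_m2_e1)
  then show ?thesis unfolding ZUJ_iff using l b by blast
qed

end

section \<open>The character \<open>\<Psi>\<^sub>\<theta>\<close> and fixed vectors of \<open>S\<^sub>d\<close>\<close>

context unramified_quadratic
begin

lemma PsiJ_eq: "PsiJ eps varpi psi' d g = psi' (eps * inverse varpi ^ d * snd (m21 g))"
proof -
  have "fst (eadd z (econj z)) / 2 = fst z" for z :: "'f \<times> 'f"
    using two_nz by simp
  then show ?thesis unfolding PsiJ_def psiE_def mtrace_def Xmat_def
    by (simp add: algebra_simps two_nz)
qed

lemma Psi_arg_pF1: "x \<in> pF v (int d + 1) \<Longrightarrow> eps * inverse varpi ^ d * x \<in> pF v 1"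
  using pF_mult_OF[OF OF_eps pF_divide_varpi_pow[of x 1 d]]
  by (simp add: add.commute power_inverse divide_inverse mult_ac)

end

locale unitary_setting = unramified_quadratic v varpi eps for v :: "'f::field \<Rightarrow> int" and varpi eps +
  fixes psi' :: "'f \<Rightarrow> complex" and theta :: "('f \<times> 'f) m2 \<Rightarrow> complex"
  assumes psi_add: "\<forall>x y. psi' (x + y) = psi' x * psi' y"
    and psi_triv: "\<forall>x\<in>pF v 1. psi' x = 1"
    and psi_nontriv: "\<exists>x\<in>OF v. psi' x \<noteq> 1"
    and theta_mult: "\<forall>z\<in>Zgrp eps. \<forall>z'\<in>Zgrp eps. theta (mmul eps z z') = theta z * theta z'"
    and theta_triv: "\<forall>z\<in>Zgrp eps \<inter> Kn eps v 1. theta z = 1"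
begin

abbreviation chi where "chi d \<equiv> PsiTheta eps v varpi psi' theta d"

lemma psi_cong: "x - y \<in> pF v 1 \<Longrightarrow> psi' x = psi' y"
  using psi_add psi_triv by (metis add_diff_cancel_left' diff_add_cancel mult.right_neutral)

lemma PsiJ_mult:
  assumes "d \<ge> 1" "j1 \<in> Jgrp eps v d" "j2 \<in> Jgrp eps v d"
  shows "PsiJ eps varpi psi' d (mmul eps j1 j2) = PsiJ eps varpi psi' d j1 * PsiJ eps varpi psi' d j2"
proof -
  note j1 = assms(2)[unfolded J_iff] and j2 = assms(3)[unfolded J_iff]
  let ?A = "eps * inverse varpi ^ d"
  define e where "e = eadd (emul eps (m21 j1) (esub (m11 j2) e1)) (emul eps (esub (m22 j1) e1) (m21 j2))"
  have eq: "snd (m21 (mmul eps j1 j2)) = snd (m21 j1) + snd (m21 j2) + snd e"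
    unfolding e_def by (simp add: algebra_simps)
  have "e \<in> pE v (int d + 1)" unfolding e_def using j1 j2
    by (intro pE_add pE_mult_ceil_halves pE_mult_ceil_halves_swap) auto
  then have "?A * snd e \<in> pF v 1" using Psi_arg_pF1 by (simp add: pE_iff)
  moreover have "?A * snd (m21 (mmul eps j1 j2)) - (?A * snd (m21 j1) + ?A * snd (m21 j2)) = ?A * snd e"
    unfolding eq by (simp add: algebra_simps)
  ultimately have "psi' (?A * snd (m21 (mmul eps j1 j2))) = psi' (?A * snd (m21 j1) + ?A * snd (m21 j2))"
    by (intro psi_cong) simp
  then show ?thesis using psi_add by (simp add: PsiJ_eq)
qed

lemma theta_scalar_mult: "enorm eps l = 1 \<Longrightarrow> enorm eps l' = 1 \<Longrightarrow>
   theta (scalar_m2 (emul eps l l')) = theta (scalar_m2 l) * theta (scalar_m2 l')"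
  using theta_mult Zgrp_eq scalar_m2_mult by (metis (mono_tags, lifting) image_eqI mem_Collect_eq)

lemma theta_mI: "theta mI = 1"
proof -
  have "esub e1 e1 = (e0 :: 'f \<times> 'f)" by (rule prod_eqI) simp_all
  then have "scalar_m2 e1 \<in> Zgrp eps \<inter> Kn eps v 1" using scalar_m2_Kn1[of e1] by simp
  then have "mI \<in> Zgrp eps \<inter> Kn eps v 1" by (simp add: scalar_m2_e1)
  then show ?thesis using theta_triv by blast
qed

lemma PsiTheta_well_defined:
  assumes d: "d \<ge> 1" and l: "enorm eps l = 1" "enorm eps l' = 1" and j: "j \<in> Jgrp eps v d" "j' \<in> Jgrp eps v d"
    and eq: "mmul eps (scalar_m2 l) (mmul eps (upper_m2 b) j) = mmul eps (scalar_m2 l') (mmul eps (upper_m2 b') j')"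
  shows "theta (scalar_m2 l) * PsiJ eps varpi psi' d j = theta (scalar_m2 l') * PsiJ eps varpi psi' d j'"
proof -
  note jj = j(1)[unfolded J_iff] and jj' = j(2)[unfolded J_iff]
  have E1: "emul eps l (m21 j) = emul eps l' (m21 j')" using arg_cong[OF eq, of m21] by simp
  have E2: "emul eps l (m22 j) = emul eps l' (m22 j')" using arg_cong[OF eq, of m22] by simp
  define r where "r = emul eps (econj l') l"
  have enr: "enorm eps r = 1" using l by (simp add: r_def enorm_mult)
  have rj22: "emul eps r (m22 j) = m22 j'"
    unfolding r_def emul_assoc E2 by (simp add: emul_assoc[symmetric] emul_conj_self_eq_1' l)
  have rj21: "emul eps r (m21 j) = m21 j'"
    unfolding r_def emul_assoc E1 by (simp add: emul_assoc[symmetric] emul_conj_self_eq_1' l)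
  have u22: "eunit eps v (m22 j)" using eunit_if_near_one pE_ceil_half_1[OF d] jj by blast
  have "esub r e1 = emul eps (esub (emul eps r (m22 j)) (m22 j)) (einv eps (m22 j))"
    using emul_esub_cancel[OF einv_mult[OF u22]] by simp
  also have "\<dots> = emul eps (esub (esub (m22 j') e1) (esub (m22 j) e1)) (einv eps (m22 j))"
    by (simp add: rj22) (rule arg_cong[where f="\<lambda>x. emul eps x _"], rule prod_eqI, simp_all)
  finally have rm: "esub r e1 \<in> pE v (ceil_half d)"
    using jj jj' einv_OE[OF u22] by (auto intro!: pE_mult_OE' pE_diff)
  have th: "theta (scalar_m2 r) = 1" using theta_triv scalar_m2_Kn1[OF enr pE_ceil_half_1[OF d rm]] by blast
  have "emul eps l' r = l" unfolding r_def by (simp add: emul_assoc[symmetric] emul_conj_self_eq_1 l)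
  then have t: "theta (scalar_m2 l) = theta (scalar_m2 l')"
    using theta_scalar_mult[OF l(2) enr] th by simp
  have "emul eps r (m21 j) = eadd (m21 j) (emul eps (esub r e1) (m21 j))"
    by (rule prod_eqI) (simp_all add: algebra_simps)
  then have "snd (m21 j') - snd (m21 j) = snd (emul eps (esub r e1) (m21 j))"
    using rj21 by simp
  moreover have "emul eps (esub r e1) (m21 j) \<in> pE v (int d + 1)"
    using pE_mult_ceil_halves[OF rm] jj by blast
  ultimately have "eps * inverse varpi ^ d * snd (m21 j') - eps * inverse varpi ^ d * snd (m21 j) \<in> pF v 1"
    using Psi_arg_pF1 by (simp add: pE_iff right_diff_distrib[symmetric])
  then have "PsiJ eps varpi psi' d j' = PsiJ eps varpi psi' d j"
    by (simp add: PsiJ_eq psi_cong)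
  then show ?thesis using t by simp
qed

lemma PsiTheta_eq:
  assumes d: "d \<ge> 1" and "enorm eps l = 1" "b \<in> OF v" "j \<in> Jgrp eps v d"
  shows "chi d (mmul eps (scalar_m2 l) (mmul eps (upper_m2 b) j)) =
     theta (scalar_m2 l) * PsiJ eps varpi psi' d j"
proof -
  let ?h = "mmul eps (scalar_m2 l) (mmul eps (upper_m2 b) j)"
  let ?P = "\<lambda>c. \<exists>z u j. z \<in> Zgrp eps \<and> u \<in> Ugrp eps v \<and> j \<in> Jgrp eps v d \<and>
      ?h = mmul eps z (mmul eps u j) \<and> c = theta z * PsiJ eps varpi psi' d j"
  have "?P (theta (scalar_m2 l) * PsiJ eps varpi psi' d j)"
    using assms Zgrp_eq Ugrp_eq by blast
  then have "?P (SOME c. ?P c)" by (rule someI)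
  then obtain z u j' where w: "z \<in> Zgrp eps" "u \<in> Ugrp eps v" "j' \<in> Jgrp eps v d"
    "?h = mmul eps z (mmul eps u j')" "(SOME c. ?P c) = theta z * PsiJ eps varpi psi' d j'" by blast
  obtain l' where l': "enorm eps l' = 1" "z = scalar_m2 l'" using w(1) Zgrp_eq by auto
  obtain b' where b': "b' \<in> OF v" "u = upper_m2 b'" using w(2) Ugrp_eq[of eps v] by auto
  have "theta (scalar_m2 l) * PsiJ eps varpi psi' d j = theta (scalar_m2 l') * PsiJ eps varpi psi' d j'"
    by (rule PsiTheta_well_defined[OF d assms(2) l'(1) assms(4) w(3)]) (use w(4) l' b' in simp)
  then show ?thesis unfolding PsiTheta_def using w(5) l' by simp
qed

lemma ZUJ_mult:
  assumes d: "d \<ge> 1" and h: "h1 \<in> ZUJ eps v d" "h2 \<in> ZUJ eps v d"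
  shows "mmul eps h1 h2 \<in> ZUJ eps v d"
    "chi d (mmul eps h1 h2) = chi d h1 * chi d h2"
proof -
  obtain l1 b1 j1 where 1: "enorm eps l1 = 1" "b1 \<in> OF v" "j1 \<in> Jgrp eps v d"
    "h1 = mmul eps (scalar_m2 l1) (mmul eps (upper_m2 b1) j1)" using h(1) ZUJ_iff by blast
  obtain l2 b2 j2 where 2: "enorm eps l2 = 1" "b2 \<in> OF v" "j2 \<in> Jgrp eps v d"
    "h2 = mmul eps (scalar_m2 l2) (mmul eps (upper_m2 b2) j2)" using h(2) ZUJ_iff by blast
  define j1' where "j1' = mmul eps (mmul eps (upper_m2 (- b2)) j1) (upper_m2 b2)"
  have j1': "j1' \<in> Jgrp eps v d" "m21 j1' = m21 j1"
    using J_conj_upper[OF 1(3) 2(2)] by (simp_all add: j1'_def)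
  have jj: "mmul eps j1' j2 \<in> Jgrp eps v d" using J_mult[OF d j1'(1) 2(3)] .
  have el: "enorm eps (emul eps l1 l2) = 1" using 1 2 by (simp add: enorm_mult)
  have bb: "b1 + b2 \<in> OF v" using 1 2 OF_add by blast
  have eq: "mmul eps h1 h2 = mmul eps (scalar_m2 (emul eps l1 l2)) (mmul eps (upper_m2 (b1 + b2)) (mmul eps j1' j2))"
    unfolding 1(4) 2(4) j1'_def by (rule scalar_upper_J_mult)
  show "mmul eps h1 h2 \<in> ZUJ eps v d" unfolding ZUJ_iff using eq el bb jj by blast
  have "chi d (mmul eps h1 h2) = theta (scalar_m2 (emul eps l1 l2)) * PsiJ eps varpi psi' d (mmul eps j1' j2)"
    using PsiTheta_eq[OF d el bb jj] eq by simp
  also have "\<dots> = theta (scalar_m2 l1) * PsiJ eps varpi psi' d j1 * (theta (scalar_m2 l2) * PsiJ eps varpi psi' d j2)"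
    using PsiJ_mult[OF d j1'(1) 2(3)] theta_scalar_mult[OF 1(1) 2(1)] j1'(2)
    by (simp add: PsiJ_eq mult_ac)
  also have "\<dots> = chi d h1 * chi d h2"
    using PsiTheta_eq[OF d 1(1-3)] PsiTheta_eq[OF d 2(1-3)] 1(4) 2(4) by simp
  finally show "chi d (mmul eps h1 h2) = chi d h1 * chi d h2" .
qed

lemma J_ZUJ:
  assumes d: "d \<ge> 1" and j: "j \<in> Jgrp eps v d"
  shows "j \<in> ZUJ eps v d" "chi d j = PsiJ eps varpi psi' d j"
proof -
  have eq: "j = mmul eps (scalar_m2 e1) (mmul eps (upper_m2 0) j)" by (simp add: scalar_m2_e1 upper_m2_0)
  show "j \<in> ZUJ eps v d" unfolding ZUJ_iff using j eq by (intro exI[of _ e1] exI[of _ 0] exI[of _ j]) simp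
  show "chi d j = PsiJ eps varpi psi' d j"
    using PsiTheta_eq[OF d _ _ j, of e1 0] eq theta_mI by (simp add: scalar_m2_e1)
qed

lemma PsiTheta_mI: "d \<ge> 1 \<Longrightarrow> chi d mI = 1"
proof -
  assume d: "d \<ge> 1"
  have "esub e1 e1 = (e0 :: 'f \<times> 'f)" by (rule prod_eqI) simp_all
  then have j: "mI \<in> Jgrp eps v d" using mI_G by (simp add: J_iff)
  have "psi' 0 = 1" using psi_triv by simp
  then show ?thesis using J_ZUJ(2)[OF d j] by (simp add: PsiJ_eq)
qed

lemma Kn_Suc_ZUJ:
  assumes d: "d \<ge> 1" and g: "g \<in> Kn eps v (d + 1)"
  shows "g \<in> ZUJ eps v d" "chi d g = 1"
proof -
  have j: "g \<in> Jgrp eps v d" using Kn_Suc_J[OF d g] .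
  show "g \<in> ZUJ eps v d" using J_ZUJ[OF d j] by simp
  have "m21 g \<in> pE v (int d + 1)" using g by (simp add: Kn_iff entries_in_def add.commute)
  then have "eps * inverse varpi ^ d * snd (m21 g) \<in> pF v 1" using Psi_arg_pF1 by (simp add: pE_iff)
  then have "PsiJ eps varpi psi' d g = 1" using psi_triv by (simp add: PsiJ_eq)
  then show "chi d g = 1" using J_ZUJ[OF d j] by simp
qed

lemma Sd_zero: "f \<in> Sd eps v varpi psi' theta d \<Longrightarrow> k \<notin> Kgrp eps v \<Longrightarrow> f k = 0"
  by (simp add: Sd_def IndSpace_def)

lemma Sd_eq: "f \<in> Sd eps v varpi psi' theta d \<Longrightarrow> h \<in> ZUJ eps v d \<Longrightarrow> k \<in> Kgrp eps v \<Longrightarrow>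
   f (mmul eps h k) = chi d h * f k"
  by (simp add: Sd_def IndSpace_def)

lemma Sd_Kn_invariant:
  assumes d: "d \<ge> 1" "d + 1 \<le> n" and f: "f \<in> Sd eps v varpi psi' theta d"
    and k: "k \<in> Kgrp eps v" and g: "g \<in> Kn eps v n"
  shows "f (mmul eps k g) = f k"
proof -
  define h where "h = mmul eps (mmul eps k g) (minv k)"
  have "h \<in> Kn eps v n" unfolding h_def
    using Kn_normal[OF k K_minv[OF k] minv_G(2)[OF K_G[OF k]] g] .
  then have h: "h \<in> Kn eps v (d + 1)" using Kn_mono d(2) by blast
  have "mmul eps h k = mmul eps k g" unfolding h_def
    by (simp add: mmul_assoc minv_G(1)[OF K_G[OF k]])
  then show ?thesis using Sd_eq[OF f Kn_Suc_ZUJ(1)[OF d(1) h] k] Kn_Suc_ZUJ(2)[OF d(1) h] by simp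
qed

lemma Sd_Kn_invariant_vanish:
  assumes d: "d \<ge> 1" "n \<le> d" and f: "f \<in> Sd eps v varpi psi' theta d"
    and fx: "\<forall>k\<in>Kgrp eps v. \<forall>g\<in>Kn eps v n. f (mmul eps k g) = f k"
  shows "f k = 0"
proof (cases "k \<in> Kgrp eps v")
  case False then show ?thesis using Sd_zero[OF f] by simp
next
  case k: True
  obtain x where x: "x \<in> OF v" "psi' x \<noteq> 1" using psi_nontriv by blast
  define c where "c = ((0::'f), varpi ^ d * x / eps)"
  have cp: "c \<in> pE v (int d)" unfolding c_def
    using pF_divide_unit[OF pF_mult_OF'[OF varpi_pow_pF x(1)] eps_nz v_eps] by (simp add: pE_iff)
  have cn: "c \<in> pE v (int n)" using pE_mono[OF _ cp] d(2) by simp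
  have hJ: "lower_m2 c \<in> Jgrp eps v d" using lower_m2_J[OF d(1) cp] by (simp add: c_def)
  have hK: "lower_m2 c \<in> Kn eps v n" using lower_m2_Kn[OF cn] by (simp add: c_def)
  have chi: "chi d (lower_m2 c) = psi' x"
  proof -
    have "eps * inverse varpi ^ d * (varpi ^ d * x / eps) = x"
      using eps_nz varpi_nz by (simp add: field_simps)
    then show ?thesis using J_ZUJ(2)[OF d(1) hJ] by (simp only: PsiJ_eq c_def snd_conv lower_m2_sel)
  qed
  define g where "g = mmul eps (mmul eps (minv k) (lower_m2 c)) k"
  have gK: "g \<in> Kn eps v n" unfolding g_def
    using Kn_normal[OF K_minv[OF k] k minv_G(1)[OF K_G[OF k]] hK] .
  have "mmul eps k g = mmul eps (lower_m2 c) k" unfolding g_def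
    by (simp add: mmul_assoc[symmetric] minv_G(2)[OF K_G[OF k]])
  then have "f (mmul eps (lower_m2 c) k) = f k" using fx k gK by metis
  moreover have "f (mmul eps (lower_m2 c) k) = psi' x * f k"
    using Sd_eq[OF f J_ZUJ(1)[OF d(1) hJ] k] chi by simp
  ultimately have "(psi' x - 1) * f k = 0" by (simp add: algebra_simps)
  then show ?thesis using x(2) by simp
qed

end

section \<open>The double cosets \<open>H\K\<close>\<close>

definition bottom_ratio :: "'f::field \<Rightarrow> ('f \<times> 'f) m2 \<Rightarrow> 'f \<times> 'f" where
  "bottom_ratio eps k = emul eps (m21 k) (einv eps (m22 k))"

definition row_label :: "'f::field \<Rightarrow> ('f \<Rightarrow> int) \<Rightarrow> nat \<Rightarrow> ('f \<times> 'f) m2 \<Rightarrow> 'f set \<times> 'f set" where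
  "row_label eps v d k =
     (res_class v (ceil_half d) (enorm eps (m22 k)), res_class v (ceil_half (Suc d)) (snd (bottom_ratio eps k)))"

text \<open>The coset \<open>H k\<close> is determined by the bottom row of \<open>k\<close>. After swapping the columns
  (right multiplication by \<open>w\<close>) if necessary, the entry \<open>k22\<close> is a unit; the label records its
  norm modulo \<open>p^ceil(d/2)\<close> and the ratio \<open>k21/k22\<close>, which lies in \<open>sqrt(eps) F\<close>,
  modulo \<open>p^ceil((d+1)/2)\<close>.\<close>

definition coset_label :: "'f::field \<Rightarrow> ('f \<Rightarrow> int) \<Rightarrow> nat \<Rightarrow> ('f \<times> 'f) m2 \<Rightarrow> bool \<times> 'f set \<times> 'f set" where
  "coset_label eps v d k = (if m22 k \<notin> pE v 1 then (True, row_label eps v d k)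
     else (False, row_label eps v d (mmul eps k mw)))"

definition coset_labels :: "('f::field \<Rightarrow> int) \<Rightarrow> nat \<Rightarrow> (bool \<times> 'f set \<times> 'f set) set" where
  "coset_labels v d = ({True} \<times> res_class v (ceil_half d) ` OF_units v \<times> res_class v (ceil_half (Suc d)) ` OF v) \<union>
              ({False} \<times> res_class v (ceil_half d) ` OF_units v \<times> res_class v (ceil_half (Suc d)) ` pF v 1)"

definition diag_m2 :: "'f::field \<Rightarrow> 'f \<times> 'f \<Rightarrow> ('f \<times> 'f) m2" where
  "diag_m2 eps a = M2 (econj (einv eps a)) e0 e0 a"

lemma mw_sel[simp]: "m11 mw = e0" "m12 mw = e1" "m21 mw = e1" "m22 mw = e0"
  by (simp_all add: mw_def)

lemma mmul_mw_mw[simp]: "mmul eps (mmul eps k mw) mw = k"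
  by (rule m2.expand) simp_all

lemma mmul_mw_minv: "mmul eps (mmul eps k2 mw) (minv (mmul eps k1 mw)) = mmul eps k2 (minv k1)"
  by (rule m2.expand) (simp_all add: algebra_simps eadd_comm)

context unramified_quadratic
begin

lemma mw_K: "mw \<in> Kgrp eps v"
  by (simp add: K_iff entries_in_def G_iff mw_def e0_def e1_def mdet_def prod_eq_iff OE_iff)

lemma fst_bottom_ratio: "k \<in> Kgrp eps v \<Longrightarrow> fst (bottom_ratio eps k) = 0"
  unfolding bottom_ratio_def using G_relations(5)[OF K_G]
  by (intro fst_ratio_eq_0) (simp add: algebra_simps)

lemma snd_bottom_ratio_OF: "k \<in> Kgrp eps v \<Longrightarrow> eunit eps v (m22 k) \<Longrightarrow> snd (bottom_ratio eps k) \<in> OF v"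
  unfolding bottom_ratio_def using snd_ratio_OF K_entries by blast

lemma left_mult_bottom_unit:
  assumes d: "d \<ge> 1" and h: "h \<in> ZUJ eps v d" and k: "k \<in> Kgrp eps v" and u: "eunit eps v (m22 k)"
  shows "eunit eps v (m22 (mmul eps h k))"
    "enorm eps (m22 (mmul eps h k)) - enorm eps (m22 k) \<in> pF v (ceil_half d)"
proof -
  obtain l t where lt: "enorm eps l = 1" "esub t e1 \<in> pE v (ceil_half d)" "m22 h = emul eps l t"
    using ZUJ_bottom_row(2)[OF h] by blast
  define s where "s = emul eps l t"
  have su: "eunit eps v (emul eps s (m22 k))" unfolding s_def
    using eunit_mult[OF eunit_mult[OF eunit_if_enorm_1[OF lt(1)] eunit_if_near_one[OF pE_ceil_half_1[OF d lt(2)]]] u] .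
  have hA: "emul eps (m21 h) (m12 k) \<in> pE v (ceil_half (Suc d))"
    using pE_mult_OE'[OF ZUJ_bottom_row(1)[OF h]] K_entries[OF k] by blast
  have U': "m22 (mmul eps h k) = eadd (emul eps s (m22 k)) (emul eps (m21 h) (m12 k))"
    using lt(3) by (simp add: s_def eadd_comm)
  show "eunit eps v (m22 (mmul eps h k))"
    unfolding U' using eunit_add_pE1[OF su pE_ceil_half_Suc_1[OF hA]] .
  have "enorm eps (m22 (mmul eps h k)) - enorm eps (emul eps s (m22 k)) \<in> pF v (ceil_half (Suc d))"
    unfolding U' using enorm_add_pE[OF eunit_OE[OF su] hA] by (simp add: ceil_half_def)
  then have 1: "enorm eps (m22 (mmul eps h k)) - enorm eps (emul eps s (m22 k)) \<in> pF v (ceil_half d)"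
    using pF_mono[OF ceil_half_le] by blast
  have "eadd e1 (esub t e1) = t" by (rule prod_eqI) simp_all
  then have "enorm eps t - 1 \<in> pF v (ceil_half d)"
    using enorm_add_pE[OF OE_e1 lt(2)] by (simp add: ceil_half_def)
  then have "(enorm eps t - 1) * enorm eps (m22 k) \<in> pF v (ceil_half d)"
    using pF_mult_OF'[OF _ enorm_OE[OF eunit_OE[OF u]]] by blast
  moreover have "enorm eps (emul eps s (m22 k)) - enorm eps (m22 k) = (enorm eps t - 1) * enorm eps (m22 k)"
    by (simp add: s_def enorm_mult lt(1) algebra_simps)
  ultimately have 2: "enorm eps (emul eps s (m22 k)) - enorm eps (m22 k) \<in> pF v (ceil_half d)"
    by simp
  show "enorm eps (m22 (mmul eps h k)) - enorm eps (m22 k) \<in> pF v (ceil_half d)"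
    using pF_add[OF 1 2] by simp
qed

lemma left_mult_bottom_ratio:
  assumes d: "d \<ge> 1" and h: "h \<in> ZUJ eps v d" and k: "k \<in> Kgrp eps v" and u: "eunit eps v (m22 k)"
  shows "snd (bottom_ratio eps (mmul eps h k)) - snd (bottom_ratio eps k) \<in> pF v (ceil_half (Suc d))"
    "m21 (mmul eps h k) \<in> pE v 1 \<longleftrightarrow> m21 k \<in> pE v 1"
proof -
  obtain l t where lt: "enorm eps l = 1" "esub t e1 \<in> pE v (ceil_half d)" "m22 h = emul eps l t"
    using ZUJ_bottom_row(2)[OF h] by blast
  define s where "s = emul eps l t"
  have su: "eunit eps v s" unfolding s_def
    using eunit_mult[OF eunit_if_enorm_1[OF lt(1)] eunit_if_near_one[OF pE_ceil_half_1[OF d lt(2)]]] .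
  note h21 = ZUJ_bottom_row(1)[OF h] and O = K_entries[OF k]
  have U': "m22 (mmul eps h k) = eadd (emul eps (m21 h) (m12 k)) (emul eps s (m22 k))"
    and W': "m21 (mmul eps h k) = eadd (emul eps (m21 h) (m11 k)) (emul eps s (m21 k))"
    using lt(3) by (simp_all add: s_def)
  have u': "eunit eps v (m22 (mmul eps h k))" using left_mult_bottom_unit(1)[OF d h k u] .
  have "esub (emul eps (m21 (mmul eps h k)) (m22 k)) (emul eps (m21 k) (m22 (mmul eps h k)))
      = emul eps (m21 h) (esub (emul eps (m11 k) (m22 k)) (emul eps (m21 k) (m12 k)))"
    unfolding U' W' by (rule prod_eqI) (simp_all add: algebra_simps)
  then have "esub (emul eps (m21 (mmul eps h k)) (m22 k)) (emul eps (m21 k) (m22 (mmul eps h k)))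
      \<in> pE v (ceil_half (Suc d))"
    using pE_mult_OE'[OF h21] O by (simp add: OE_diff OE_mult)
  then have "esub (bottom_ratio eps (mmul eps h k)) (bottom_ratio eps k) \<in> pE v (ceil_half (Suc d))"
    unfolding bottom_ratio_def ratio_diff[OF einv_mult[OF u] einv_mult[OF u']]
    using pE_mult_OE' OE_mult einv_OE u u' by blast
  then show "snd (bottom_ratio eps (mmul eps h k)) - snd (bottom_ratio eps k) \<in> pF v (ceil_half (Suc d))"
    by (simp add: pE_iff)
  have hB: "emul eps (m21 h) (m11 k) \<in> pE v 1"
    using pE_ceil_half_Suc_1[OF pE_mult_OE'[OF h21]] O by blast
  have "esub (m21 (mmul eps h k)) (emul eps (m21 h) (m11 k)) = emul eps s (m21 k)"
    unfolding W' by (rule prod_eqI) simp_all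
  then show "m21 (mmul eps h k) \<in> pE v 1 \<longleftrightarrow> m21 k \<in> pE v 1"
    using pE_diff[OF _ hB] pE_add[OF hB] eunit_mult_pE[OF su] W'
    by (metis eadd_comm)
qed

lemma row_label_left_mult:
  assumes d: "d \<ge> 1" and h: "h \<in> ZUJ eps v d" and k: "k \<in> Kgrp eps v" and u: "eunit eps v (m22 k)"
  shows "row_label eps v d (mmul eps h k) = row_label eps v d k"
proof -
  have hk: "mmul eps h k \<in> Kgrp eps v" using K_mult[OF ZUJ_K[OF h] k] .
  note u' = left_mult_bottom_unit(1)[OF d h k u]
  show ?thesis
    using left_mult_bottom_unit(2)[OF d h k u] left_mult_bottom_ratio(1)[OF d h k u]
      res_class_eq_iff[OF enorm_OE[OF eunit_OE[OF u']] enorm_OE[OF eunit_OE[OF u]]]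
      res_class_eq_iff[OF snd_bottom_ratio_OF[OF hk u'] snd_bottom_ratio_OF[OF k u]]
    by (simp add: row_label_def)
qed

lemma coset_label_left_invariant:
  assumes d: "d \<ge> 1" and h: "h \<in> ZUJ eps v d" and k: "k \<in> Kgrp eps v"
  shows "coset_label eps v d (mmul eps h k) = coset_label eps v d k"
proof (cases "m22 k \<in> pE v 1")
  case False
  then have u: "eunit eps v (m22 k)" using eunit_iff K_entries[OF k] by blast
  then have "m22 (mmul eps h k) \<notin> pE v 1"
    using eunit_notin_pE1[OF left_mult_bottom_unit(1)[OF d h k]] by blast
  then show ?thesis using False row_label_left_mult[OF d h k u] by (simp add: coset_label_def)
next
  case True
  have kw: "mmul eps k mw \<in> Kgrp eps v" using K_mult[OF k mw_K] .
  have u: "eunit eps v (m22 (mmul eps k mw))"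
    using True K_bottom_row_unit[OF k] eunit_iff K_entries[OF k] by auto
  have "m22 (mmul eps h k) \<in> pE v 1"
    using True left_mult_bottom_ratio(2)[OF d h kw u] by (simp add: mmul_assoc[symmetric])
  then show ?thesis
    using True row_label_left_mult[OF d h kw u] by (simp add: coset_label_def mmul_assoc)
qed

lemma quotient_bottom_left:
  assumes k: "k1 \<in> Kgrp eps v" "k2 \<in> Kgrp eps v" and u: "eunit eps v (m22 k1)" "eunit eps v (m22 k2)"
    and ratio: "snd (bottom_ratio eps k2) - snd (bottom_ratio eps k1) \<in> pF v n"
  shows "m21 (mmul eps k2 (minv k1)) \<in> pE v n"
proof -
  define q1 where "q1 = bottom_ratio eps k1"
  define q2 where "q2 = bottom_ratio eps k2"
  have W: "m21 k1 = emul eps q1 (m22 k1)" "m21 k2 = emul eps q2 (m22 k2)"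
    unfolding q1_def q2_def bottom_ratio_def by (simp_all add: emul_assoc einv_mult' u)
  have fq: "fst q1 = 0" "fst q2 = 0" using fst_bottom_ratio k by (simp_all add: q1_def q2_def)
  have dq: "esub q2 q1 \<in> pE v n" using fq ratio by (simp add: q1_def q2_def pE_iff)
  have "m21 (mmul eps k2 (minv k1)) = emul eps (emul eps (m22 k2) (econj (m22 k1))) (esub q2 q1)"
    using fq by (simp add: W) (rule prod_eqI; simp add: algebra_simps)
  then show ?thesis
    using pE_mult_OE[OF _ dq] OE_mult eunit_OE u by simp
qed

lemma quotient_bottom_right_eq:
  assumes k: "k1 \<in> Kgrp eps v" and u: "eunit eps v (m22 k1)" "eunit eps v (m22 k2)"
  shows "m22 (mmul eps k2 (minv k1)) = eadd (emul eps (m22 k2) (einv eps (m22 k1)))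
    (emul eps (m22 k2) (emul eps (esub (bottom_ratio eps k2) (bottom_ratio eps k1)) (econj (m12 k1))))"
proof -
  define q1 where "q1 = bottom_ratio eps k1"
  define q2 where "q2 = bottom_ratio eps k2"
  have W: "m21 k1 = emul eps q1 (m22 k1)" "m21 k2 = emul eps q2 (m22 k2)"
    unfolding q1_def q2_def bottom_ratio_def by (simp_all add: emul_assoc einv_mult' u)
  have "eadd (emul eps (m21 k1) (econj (m12 k1))) (emul eps (m22 k1) (econj (m11 k1))) = e1"
    using arg_cong[OF minv_G(2)[OF K_G[OF k]], of m22] by simp
  then have "emul eps (m22 k1) (eadd (econj (m11 k1)) (emul eps q1 (econj (m12 k1)))) = e1"
    unfolding W(1) by (simp add: prod_eq_iff algebra_simps)
  then have row: "eadd (econj (m11 k1)) (emul eps q1 (econj (m12 k1))) = einv eps (m22 k1)"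
    using cancel_einv[OF u(1), of "eadd (econj (m11 k1)) (emul eps q1 (econj (m12 k1)))"]
    by (simp add: emul_comm)
  have "m22 (mmul eps k2 (minv k1)) = eadd (emul eps (m21 k2) (econj (m12 k1))) (emul eps (m22 k2) (econj (m11 k1)))"
    by simp
  also have "\<dots> = eadd (emul eps (m22 k2) (eadd (econj (m11 k1)) (emul eps q1 (econj (m12 k1)))))
      (emul eps (m22 k2) (emul eps (esub q2 q1) (econj (m12 k1))))"
    unfolding W(2) by (rule prod_eqI) (simp_all add: algebra_simps)
  also have "\<dots> = eadd (emul eps (m22 k2) (einv eps (m22 k1)))
      (emul eps (m22 k2) (emul eps (esub q2 q1) (econj (m12 k1))))"
    by (simp only: row)
  finally show ?thesis by (simp only: q1_def q2_def)
qed

lemma quotient_bottom_right: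
  assumes d: "d \<ge> 1" and k: "k1 \<in> Kgrp eps v" "k2 \<in> Kgrp eps v"
    and u: "eunit eps v (m22 k1)" "eunit eps v (m22 k2)"
    and ratio: "snd (bottom_ratio eps k2) - snd (bottom_ratio eps k1) \<in> pF v (ceil_half (Suc d))"
    and norms: "enorm eps (m22 k2) - enorm eps (m22 k1) \<in> pF v (ceil_half d)"
  shows "\<exists>l t. enorm eps l = 1 \<and> esub t e1 \<in> pE v (ceil_half d) \<and>
    m22 (mmul eps k2 (minv k1)) = emul eps l t"
proof -
  define dq where "dq = esub (bottom_ratio eps k2) (bottom_ratio eps k1)"
  have dq: "dq \<in> pE v (ceil_half (Suc d))"
    using fst_bottom_ratio k ratio by (simp add: dq_def pE_iff)
  define mu where "mu = emul eps (m22 k2) (einv eps (m22 k1))"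
  define e where "e = emul eps (m22 k2) (emul eps dq (econj (m12 k1)))"
  have quot: "m22 (mmul eps k2 (minv k1)) = eadd mu e"
    unfolding mu_def e_def dq_def using quotient_bottom_right_eq[OF k(1) u] .
  have u1: "enorm eps (m22 k1) \<noteq> 0" "v (enorm eps (m22 k1)) = 0" using u(1) by (auto simp: eunit_def)
  have "enorm eps mu - 1 = (enorm eps (m22 k2) - enorm eps (m22 k1)) / enorm eps (m22 k1)"
    unfolding mu_def enorm_mult enorm_einv[OF eunit_ne[OF u(1)]] using u1 by (simp add: field_simps)
  then have "enorm eps mu - 1 \<in> pF v (ceil_half d)" using pF_divide_unit[OF norms u1] by simp
  moreover have "eunit eps v mu" unfolding mu_def using eunit_mult[OF u(2) eunit_einv[OF u(1)]] .
  ultimately obtain l s where ls: "enorm eps l = 1" "s \<in> pE v (ceil_half d)" "mu = emul eps l (eadd e1 s)"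
    using norm_near_one_decomp ceil_half_ge1[OF d] by blast
  have e: "e \<in> pE v (ceil_half (Suc d))" unfolding e_def
    using pE_mult_OE[OF eunit_OE[OF u(2)] pE_mult_OE'[OF dq]] K_entries[OF k(1)] by simp
  define t where "t = eadd (eadd e1 s) (emul eps (econj l) e)"
  have "esub t e1 = eadd s (emul eps (econj l) e)" unfolding t_def by (rule prod_eqI) simp_all
  then have t: "esub t e1 \<in> pE v (ceil_half d)"
    using pE_add[OF ls(2) pE_mult_OE[OF _ pE_ceil_half_Suc_ceil_half[OF e]]] enorm_eq_1_OE[of "econj l"] ls(1)
    by simp
  have "emul eps l t = eadd (emul eps l (eadd e1 s)) (emul eps (emul eps l (econj l)) e)"
    unfolding t_def by (rule prod_eqI) (simp_all add: algebra_simps)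
  then have "m22 (mmul eps k2 (minv k1)) = emul eps l t"
    using quot ls(3) emul_conj_self_eq_1[OF ls(1)] by simp
  then show ?thesis using ls(1) t by blast
qed

lemma row_label_inj:
  assumes d: "d \<ge> 1" and k: "k1 \<in> Kgrp eps v" "k2 \<in> Kgrp eps v"
    and u: "eunit eps v (m22 k1)" "eunit eps v (m22 k2)"
    and eq: "row_label eps v d k1 = row_label eps v d k2"
  shows "mmul eps k2 (minv k1) \<in> ZUJ eps v d"
proof -
  have norms: "enorm eps (m22 k2) - enorm eps (m22 k1) \<in> pF v (ceil_half d)"
    using eq[symmetric] res_class_eq_iff[OF enorm_OE enorm_OE] eunit_OE u by (simp add: row_label_def)
  have ratio: "snd (bottom_ratio eps k2) - snd (bottom_ratio eps k1) \<in> pF v (ceil_half (Suc d))"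
    using eq[symmetric] res_class_eq_iff[OF snd_bottom_ratio_OF[OF k(2) u(2)] snd_bottom_ratio_OF[OF k(1) u(1)]]
    by (simp add: row_label_def)
  obtain l t where lt: "enorm eps l = 1" "esub t e1 \<in> pE v (ceil_half d)"
    "m22 (mmul eps k2 (minv k1)) = emul eps l t"
    using quotient_bottom_right[OF d k u ratio norms] by blast
  show ?thesis
    using ZUJ_if_bottom_row[OF d _ quotient_bottom_left[OF k u ratio] lt] K_mult[OF k(2) K_minv[OF k(1)]] .
qed

lemma coset_label_inj:
  assumes d: "d \<ge> 1" and k: "k1 \<in> Kgrp eps v" "k2 \<in> Kgrp eps v"
    and eq: "coset_label eps v d k1 = coset_label eps v d k2"
  shows "mmul eps k2 (minv k1) \<in> ZUJ eps v d"
proof (cases "m22 k1 \<in> pE v 1")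
  case False
  then have "m22 k2 \<notin> pE v 1" and "row_label eps v d k1 = row_label eps v d k2"
    using eq by (auto simp: coset_label_def split: if_splits)
  then show ?thesis
    using row_label_inj[OF d k] False eunit_iff K_entries k by blast
next
  case True
  then have "m22 k2 \<in> pE v 1"
    and "row_label eps v d (mmul eps k1 mw) = row_label eps v d (mmul eps k2 mw)"
    using eq by (auto simp: coset_label_def split: if_splits)
  moreover have "eunit eps v (m22 (mmul eps k mw))" if "k \<in> Kgrp eps v" "m22 k \<in> pE v 1" for k
    using that K_bottom_row_unit eunit_iff K_entries by auto
  ultimately show ?thesis
    using row_label_inj[OF d K_mult[OF k(1) mw_K] K_mult[OF k(2) mw_K]] True k
    by (simp add: mmul_mw_minv)
qed

lemma coset_label_in:
  assumes k: "k \<in> Kgrp eps v"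
  shows "coset_label eps v d k \<in> coset_labels v d"
proof (cases "m22 k \<in> pE v 1")
  case False
  then have u: "eunit eps v (m22 k)" using eunit_iff K_entries[OF k] by blast
  then show ?thesis using False enorm_eunit_OF_units[OF u] snd_bottom_ratio_OF[OF k u]
    by (simp add: coset_label_def coset_labels_def row_label_def)
next
  case True
  then have u: "eunit eps v (m21 k)" using K_bottom_row_unit[OF k] eunit_iff K_entries[OF k] by blast
  have "snd (bottom_ratio eps (mmul eps k mw)) \<in> pF v 1"
    using pE_mult_OE'[OF True einv_OE[OF u]] by (simp add: bottom_ratio_def pE_iff)
  then show ?thesis using True enorm_eunit_OF_units[OF u]
    by (simp add: coset_label_def coset_labels_def row_label_def)
qed

lemma enorm_surj_units:
  assumes d: "d \<ge> 1" and u: "u \<in> OF_units v"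
  shows "\<exists>a. eunit eps v a \<and> enorm eps a - u \<in> pF v (ceil_half d)"
proof -
  have uu: "u \<in> OF v" "u \<notin> pF v 1" using u by (auto simp: OF_units_def)
  obtain a where a: "a \<in> OE v" "enorm eps a - u \<in> pF v (int (nat (ceil_half d)))" using enorm_surj_mod_pn[OF uu] by blast
  have a2: "enorm eps a - u \<in> pF v (ceil_half d)" using a(2) by (simp add: ceil_half_def)
  have "a \<notin> pE v 1"
  proof
    assume "a \<in> pE v 1"
    then have "enorm eps a \<in> pF v 1" using enorm_pE[of a 1] pF_mono[of 1 2] by simp
    moreover have "enorm eps a - u \<in> pF v 1" using a2 pF_mono ceil_half_ge1[OF d] by blast
    ultimately have "enorm eps a - (enorm eps a - u) \<in> pF v 1" using pF_diff by blast
    then show False using uu by simp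
  qed
  then show ?thesis using a a2 eunit_iff by blast
qed

lemma diag_m2_K:
  assumes u: "eunit eps v a"
  shows "diag_m2 eps a \<in> Kgrp eps v"
proof -
  obtain x y where a: "a = (x, y)" by (cases a)
  have N: "x * x - eps * y * y \<noteq> 0" using u a by (auto simp: eunit_def enorm_def)
  have e: "diag_m2 eps a = M2 (x / (x * x - eps * y * y), y / (x * x - eps * y * y)) (0, 0) (0, 0) (x, y)"
    unfolding diag_m2_def a by (simp add: einv_def econj_def enorm_def e0_def)
  have det: "mdet eps (diag_m2 eps a) = emul eps (econj (einv eps a)) a"
    by (rule prod_eqI) (simp_all add: diag_m2_def mdet_def)
  have "enorm eps (emul eps (econj (einv eps a)) a) = 1"
    using enorm_einv[OF eunit_ne[OF u]] u unfolding enorm_mult by (simp add: eunit_def)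
  then have "mdet eps (diag_m2 eps a) \<noteq> e0" unfolding det using enorm_eq_0_iff[of "emul eps (econj (einv eps a)) a"] by simp
  moreover have r: "x / (x * x - eps * y * y) * x - eps * (y / (x * x - eps * y * y)) * y = 1"
  proof -
    define M where "M = x * x - eps * y * y"
    have "M \<noteq> 0" using N by (simp add: M_def)
    then have "x / M * x - eps * (y / M) * y = (x * x - eps * y * y) / M" by (simp add: field_simps)
    also have "\<dots> = 1" using \<open>M \<noteq> 0\<close> by (simp add: M_def)
    finally show ?thesis by (simp add: M_def)
  qed
  moreover have "x / (x * x - eps * y * y) * y - y / (x * x - eps * y * y) * x = 0" by simp
  ultimately have G: "diag_m2 eps a \<in> Ggrp eps" unfolding e G_iff by simp
  have "econj (einv eps a) \<in> OE v" using einv_OE[OF u] by simp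
  then show ?thesis using G eunit_OE[OF u] by (simp add: K_iff entries_in_def diag_m2_def)
qed

lemma coset_label_surj:
  assumes d: "d \<ge> 1" and s: "s \<in> coset_labels v d"
  shows "\<exists>k\<in>Kgrp eps v. coset_label eps v d k = s"
proof -
  obtain b u y where s': "s = (b, res_class v (ceil_half d) u, res_class v (ceil_half (Suc d)) y)"
    "u \<in> OF_units v" "y \<in> OF v" "\<not> b \<Longrightarrow> y \<in> pF v 1"
    using s pF1_OF unfolding coset_labels_def by blast
  obtain a where a: "eunit eps v a" "enorm eps a - u \<in> pF v (ceil_half d)"
    using enorm_surj_units[OF d s'(2)] by blast
  define k where "k = mmul eps (diag_m2 eps a) (lower_m2 (0, y))"
  have "lower_m2 (0, y) \<in> Kgrp eps v"
    using lower_m2_Kn[of "(0, y)" 0] s'(3) by (simp add: Kn_iff OF_def pE_iff)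
  then have kK: "k \<in> Kgrp eps v" using K_mult[OF diag_m2_K[OF a(1)]] by (simp add: k_def)
  have k22: "m22 k = a" and k21: "m21 k = emul eps a (0, y)"
    by (simp_all add: k_def diag_m2_def)
  have "row_label eps v d k = (res_class v (ceil_half d) u, res_class v (ceil_half (Suc d)) y)"
    using res_class_eq_iff[OF enorm_OE[OF eunit_OE[OF a(1)]] OF_units_OF[OF s'(2)]] a(2)
    by (simp add: row_label_def bottom_ratio_def k22 k21 cancel_einv[OF a(1)])
  moreover have "m22 k \<notin> pE v 1" using eunit_notin_pE1[OF a(1)] k22 by simp
  moreover have "m22 (mmul eps k mw) \<in> pE v 1" if "\<not> b"
    using pE_mult_OE[OF eunit_OE[OF a(1)], of "(0, y)" 1] s'(4)[OF that] by (simp add: k21 pE_iff)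
  ultimately have "coset_label eps v d (if b then k else mmul eps k mw) = s"
    using s'(1) by (simp add: coset_label_def)
  then show ?thesis using kK K_mult[OF kK mw_K] by (metis (full_types))
qed

lemma finite_coset_labels: "finite (coset_labels v d)"
proof -
  have f1: "finite (res_class v (ceil_half d) ` OF_units v)" unfolding ceil_half_def by (rule finite_res_class_units)
  have f2: "finite (res_class v (ceil_half (Suc d)) ` OF v)" unfolding ceil_half_def by (rule finite_res_class)
  have f3: "finite (res_class v (ceil_half (Suc d)) ` pF v 1)" unfolding ceil_half_def by (rule finite_res_class_pF1)
  show ?thesis unfolding coset_labels_def using f1 f2 f3 by (intro finite_UnI finite_cartesian_product) auto
qed

lemma card_coset_labels:
  assumes d: "d \<ge> 1"
  shows "card (coset_labels v d) = (q * q - 1) * q ^ (d - 1)"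
proof -
  define a where "a = (d + 1) div 2 - 1"
  define b where "b = (d + 2) div 2 - 1"
  have ab: "a + b = d - 1" using d unfolding a_def b_def by presburger
  have m: "ceil_half d = int a + 1" "ceil_half (Suc d) = int b + 1" using d unfolding a_def b_def ceil_half_def by auto
  have c1: "card (res_class v (ceil_half d) ` OF_units v) = q ^ (a + 1) - q ^ a" unfolding m using card_res_class_units .
  have c2: "card (res_class v (ceil_half (Suc d)) ` OF v) = q ^ (b + 1)" unfolding m using card_res_class[of "b+1"] by (simp add: add.commute)
  have c3: "card (res_class v (ceil_half (Suc d)) ` pF v 1) = q ^ b" unfolding m using card_res_class_pF1 .
  have f1: "finite (res_class v (ceil_half d) ` OF_units v)" unfolding m using finite_res_class_units[of "a+1"] by (simp add: add.commute)
  have f2: "finite (res_class v (ceil_half (Suc d)) ` OF v)" unfolding m using finite_res_class[of "b+1"] by (simp add: add.commute)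
  have f3: "finite (res_class v (ceil_half (Suc d)) ` pF v 1)" unfolding m using finite_res_class_pF1[of "b+1"] by (simp add: add.commute)
  have "card (coset_labels v d) = card ({True} \<times> res_class v (ceil_half d) ` OF_units v \<times> res_class v (ceil_half (Suc d)) ` OF v) +
      card ({False} \<times> res_class v (ceil_half d) ` OF_units v \<times> res_class v (ceil_half (Suc d)) ` pF v 1)"
    unfolding coset_labels_def using f1 f2 f3 by (intro card_Un_disjoint) auto
  also have "\<dots> = (q ^ (a + 1) - q ^ a) * q ^ (b + 1) + (q ^ (a + 1) - q ^ a) * q ^ b"
    by (simp add: card_cartesian_product c1 c2 c3)
  also have "\<dots> = (q * q - 1) * q ^ (a + b)"
  proof -
    obtain r where r: "q = Suc r" using q_ge_1 by (cases q) auto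
    have e1: "Suc r ^ (a + 1) - Suc r ^ a = Suc r ^ a * r" by simp
    have e2: "Suc r * Suc r - 1 = r * r + 2 * r" by simp
    show ?thesis unfolding r e1 e2 by (simp add: algebra_simps power_add)
  qed
  finally show ?thesis using ab by simp
qed

end

section \<open>A basis of the fixed vectors and its cardinality\<close>

lemma sum_apply: "(\<Sum>i\<in>A. F i) x = (\<Sum>i\<in>A. F i x)"
  by (induction A rule: infinite_finite_induct) auto

lemma vs_cscale: "vector_space (cscale :: complex \<Rightarrow> (nat \<Rightarrow> 'b \<Rightarrow> complex) \<Rightarrow> _)"
  by unfold_locales (auto simp: cscale_def fun_eq_iff algebra_simps)

lemma dual_family_independent:
  fixes e :: "'i \<Rightarrow> nat \<Rightarrow> 'b \<Rightarrow> complex" and pt :: "'i \<Rightarrow> nat \<times> 'b"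
  assumes fin: "finite I"
    and dual: "\<And>i j. i \<in> I \<Longrightarrow> j \<in> I \<Longrightarrow> e i (fst (pt j)) (snd (pt j)) = (if i = j then 1 else 0)"
  shows "inj_on e I" "\<not> module.dependent cscale (e ` I)"
proof -
  interpret vs: vector_space "cscale :: complex \<Rightarrow> (nat \<Rightarrow> 'b \<Rightarrow> complex) \<Rightarrow> _"
    by (rule vs_cscale)
  show inj: "inj_on e I"
  proof (rule inj_onI)
    fix i j assume "i \<in> I" "j \<in> I" "e i = e j"
    then show "i = j" using dual[of i j] dual[of j j] by (auto split: if_splits)
  qed
  show "vs.independent (e ` I)"
  proof
    assume "vs.dependent (e ` I)"
    then obtain u where u: "\<exists>w\<in>e ` I. u w \<noteq> 0" "(\<Sum>w\<in>e ` I. cscale (u w) w) = 0"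
      using vs.dependent_finite[OF finite_imageI[OF fin]] by blast
    then obtain i0 where i0: "i0 \<in> I" "u (e i0) \<noteq> 0" by blast
    have "0 = (\<Sum>w\<in>e ` I. cscale (u w) w) (fst (pt i0)) (snd (pt i0))"
      using u(2) by simp
    also have "\<dots> = (\<Sum>i\<in>I. u (e i) * e i (fst (pt i0)) (snd (pt i0)))"
      by (simp add: sum_apply cscale_def sum.reindex[OF inj])
    also have "\<dots> = (\<Sum>i\<in>I. if i = i0 then u (e i) else 0)"
      using dual[OF _ i0(1)] by (intro sum.cong) auto
    also have "\<dots> = u (e i0)" using i0(1) fin by simp
    finally show False using i0(2) by simp
  qed
qed

definition coset_rep :: "'f::field \<Rightarrow> ('f \<Rightarrow> int) \<Rightarrow> nat \<Rightarrow> bool \<times> 'f set \<times> 'f set \<Rightarrow> ('f \<times> 'f) m2" where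
  "coset_rep eps v d s = (SOME k. k \<in> Kgrp eps v \<and> coset_label eps v d k = s)"

context unitary_setting
begin

lemma coset_rep_spec:
  assumes "d \<ge> 1" "s \<in> coset_labels v d"
  shows "coset_rep eps v d s \<in> Kgrp eps v" "coset_label eps v d (coset_rep eps v d s) = s"
proof -
  have "\<exists>k. k \<in> Kgrp eps v \<and> coset_label eps v d k = s" using coset_label_surj[OF assms] by blast
  then have "coset_rep eps v d s \<in> Kgrp eps v \<and> coset_label eps v d (coset_rep eps v d s) = s"
    unfolding coset_rep_def by (rule someI_ex)
  then show "coset_rep eps v d s \<in> Kgrp eps v" "coset_label eps v d (coset_rep eps v d s) = s" by auto
qed

definition coset_fun :: "nat \<Rightarrow> bool \<times> 'f set \<times> 'f set \<Rightarrow> ('f \<times> 'f) m2 \<Rightarrow> complex" where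
  "coset_fun d s k = (if k \<in> Kgrp eps v \<and> coset_label eps v d k = s then chi d (mmul eps k (minv (coset_rep eps v d s))) else 0)"

lemma coset_fun_Sd:
  assumes d: "d \<ge> 1" and s: "s \<in> coset_labels v d"
  shows "coset_fun d s \<in> Sd eps v varpi psi' theta d"
proof -
  note ks = coset_rep_spec[OF d s]
  have "coset_fun d s (mmul eps h k) = chi d h * coset_fun d s k"
    if h: "h \<in> ZUJ eps v d" and k: "k \<in> Kgrp eps v" for h k
  proof -
    have hk: "mmul eps h k \<in> Kgrp eps v" using K_mult[OF ZUJ_K[OF h] k] .
    have ph: "coset_label eps v d (mmul eps h k) = coset_label eps v d k" using coset_label_left_invariant[OF d h k] .
    show ?thesis
    proof (cases "coset_label eps v d k = s")
      case True
      have kk: "mmul eps k (minv (coset_rep eps v d s)) \<in> ZUJ eps v d"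
        using coset_label_inj[OF d ks(1) k] True ks(2) by simp
      have "chi d (mmul eps (mmul eps h k) (minv (coset_rep eps v d s))) =
            chi d (mmul eps h (mmul eps k (minv (coset_rep eps v d s))))" by (simp add: mmul_assoc)
      also have "\<dots> = chi d h * chi d (mmul eps k (minv (coset_rep eps v d s)))" using ZUJ_mult(2)[OF d h kk] .
      finally show ?thesis using True hk k ph by (simp add: coset_fun_def)
    next
      case False then show ?thesis using hk k ph by (simp add: coset_fun_def)
    qed
  qed
  then show ?thesis unfolding Sd_def IndSpace_def by (auto simp: coset_fun_def)
qed

lemma coset_fun_rep:
  assumes d: "d \<ge> 1" and s: "s \<in> coset_labels v d"
  shows "coset_fun d s (coset_rep eps v d s) = 1"
  using coset_rep_spec[OF d s] minv_G(2)[OF K_G[OF coset_rep_spec(1)[OF d s]]] PsiTheta_mI[OF d] by (simp add: coset_fun_def)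

lemma coset_fun_other_rep:
  assumes d: "d \<ge> 1" and s': "s' \<in> coset_labels v d" and ne: "s \<noteq> s'"
  shows "coset_fun d s (coset_rep eps v d s') = 0"
  using coset_rep_spec[OF d s'] ne by (simp add: coset_fun_def)

lemma Sd_expand:
  assumes d: "d \<ge> 1" and f: "f \<in> Sd eps v varpi psi' theta d"
  shows "f k = (\<Sum>s\<in>coset_labels v d. f (coset_rep eps v d s) * coset_fun d s k)"
proof (cases "k \<in> Kgrp eps v")
  case False
  then show ?thesis using Sd_zero[OF f] by (simp add: coset_fun_def)
next
  case k: True
  define s0 where "s0 = coset_label eps v d k"
  define k0 where "k0 = coset_rep eps v d s0"
  have s0: "s0 \<in> coset_labels v d" using coset_label_in[OF k] by (simp add: s0_def)
  note k0 = coset_rep_spec[OF d s0, folded k0_def]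
  have h: "mmul eps k (minv k0) \<in> ZUJ eps v d"
    using coset_label_inj[OF d k0(1) k] k0(2) by (simp add: s0_def)
  have "f k = f (mmul eps (mmul eps k (minv k0)) k0)"
    by (simp add: mmul_assoc minv_G(1)[OF K_G[OF k0(1)]])
  also have "\<dots> = chi d (mmul eps k (minv k0)) * f k0" using Sd_eq[OF f h k0(1)] .
  also have "\<dots> = (\<Sum>s\<in>coset_labels v d.
      if s = s0 then f (coset_rep eps v d s) * chi d (mmul eps k (minv (coset_rep eps v d s))) else 0)"
    using s0 finite_coset_labels by (simp add: k0_def mult.commute)
  also have "\<dots> = (\<Sum>s\<in>coset_labels v d. f (coset_rep eps v d s) * coset_fun d s k)"
    by (rule sum.cong) (auto simp: coset_fun_def s0_def k)
  finally show ?thesis .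
qed

definition basis_vec :: "nat \<Rightarrow> bool \<times> 'f set \<times> 'f set \<Rightarrow> nat \<Rightarrow> ('f \<times> 'f) m2 \<Rightarrow> complex" where
  "basis_vec d s = (\<lambda>d'. if d' = d then coset_fun d s else (\<lambda>_. 0))"

lemma zero_Sd: "(\<lambda>_. 0) \<in> Sd eps v varpi psi' theta d"
  by (simp add: Sd_def IndSpace_def)

lemma basis_vec_dual:
  assumes "d \<ge> 1" "s \<in> coset_labels v d" "d0 \<ge> 1" "s0 \<in> coset_labels v d0"
  shows "basis_vec d s d0 (coset_rep eps v d0 s0) = (if (d, s) = (d0, s0) then 1 else 0)"
  using coset_fun_rep[OF assms(3,4)] coset_fun_other_rep[OF assms(3,4), of s]
  by (auto simp: basis_vec_def)

lemma basis_vec_fixed: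
  assumes d: "P d" "d \<ge> 1" "d \<le> n" and s: "s \<in> coset_labels v d"
  shows "basis_vec d s \<in> fixedVecs eps v (Suc n) (tauSpace eps v varpi psi' theta P)"
proof -
  have "{d'. basis_vec d s d' \<noteq> (\<lambda>_. 0)} \<subseteq> {d}" by (auto simp: basis_vec_def)
  then have "finite {d'. basis_vec d s d' \<noteq> (\<lambda>_. 0)}" by (rule finite_subset) simp
  then have "basis_vec d s \<in> tauSpace eps v varpi psi' theta P"
    using d coset_fun_Sd[OF d(2) s] zero_Sd by (auto simp: tauSpace_def basis_vec_def)
  moreover have "basis_vec d s d' (mmul eps k g) = basis_vec d s d' k"
    if "k \<in> Kgrp eps v" "g \<in> Kn eps v (Suc n)" for d' k g
    using Sd_Kn_invariant[OF d(2) _ coset_fun_Sd[OF d(2) s] that] d(3) by (auto simp: basis_vec_def)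
  ultimately show ?thesis by (simp add: fixedVecs_def)
qed

lemma fixed_vec_vanish:
  assumes Pge: "\<And>d. P d \<Longrightarrow> d \<ge> 1"
    and f: "f \<in> fixedVecs eps v (Suc n) (tauSpace eps v varpi psi' theta P)"
    and d: "\<not> (P d \<and> d \<le> n)"
  shows "f d = (\<lambda>_. 0)"
proof (cases "P d")
  case True
  have "f d \<in> Sd eps v varpi psi' theta d" using f True by (simp add: fixedVecs_def tauSpace_def)
  moreover have "\<forall>k\<in>Kgrp eps v. \<forall>g\<in>Kn eps v (Suc n). f d (mmul eps k g) = f d k"
    using f by (simp add: fixedVecs_def)
  ultimately show ?thesis using Sd_Kn_invariant_vanish[OF Pge[OF True], of "Suc n"] True d
    by (intro ext) simp
next
  case False
  then show ?thesis using f by (simp add: fixedVecs_def tauSpace_def)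
qed

lemma fixed_vec_expand:
  assumes "\<And>d. P d \<Longrightarrow> d \<ge> 1"
    and "f \<in> fixedVecs eps v (Suc n) (tauSpace eps v varpi psi' theta P)"
  defines "D \<equiv> {d. P d \<and> d \<le> n}"
  shows "f = (\<Sum>(d, s)\<in>Sigma D (coset_labels v). cscale (f d (coset_rep eps v d s)) (basis_vec d s))"
proof (intro ext)
  fix d' k
  have finD: "finite D" unfolding D_def by (rule finite_subset[of _ "{..n}"]) auto
  let ?c = "\<lambda>d. \<Sum>s\<in>coset_labels v d. f d (coset_rep eps v d s) * coset_fun d s k"
  have "(\<Sum>(d, s)\<in>Sigma D (coset_labels v). cscale (f d (coset_rep eps v d s)) (basis_vec d s)) d' k
      = (\<Sum>(d, s)\<in>Sigma D (coset_labels v). f d (coset_rep eps v d s) * basis_vec d s d' k)"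
    by (simp add: sum_apply cscale_def split_def)
  also have "\<dots> = (\<Sum>d\<in>D. \<Sum>s\<in>coset_labels v d. f d (coset_rep eps v d s) * basis_vec d s d' k)"
    using finD finite_coset_labels by (subst sum.Sigma) auto
  also have "\<dots> = (\<Sum>d\<in>D. if d = d' then ?c d' else 0)"
    by (rule sum.cong) (auto simp: basis_vec_def)
  also have "\<dots> = (if d' \<in> D then ?c d' else 0)"
    using finD by (simp add: sum.delta')
  also have "\<dots> = f d' k"
  proof (cases "d' \<in> D")
    case True
    then have "f d' \<in> Sd eps v varpi psi' theta d'"
      using assms(2) by (simp add: D_def fixedVecs_def tauSpace_def)
    then show ?thesis using True Sd_expand[OF assms(1)] by (simp add: D_def)
  next
    case False
    then show ?thesis using fixed_vec_vanish[OF assms(1,2), of d'] by (simp add: D_def)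
  qed
  finally show "f d' k = (\<Sum>(d, s)\<in>Sigma D (coset_labels v). cscale (f d (coset_rep eps v d s)) (basis_vec d s)) d' k"
    by simp
qed

lemma cdim_fixed_tauSpace:
  assumes Pge: "\<And>d. P d \<Longrightarrow> d \<ge> 1"
  shows "cdim (fixedVecs eps v (Suc n) (tauSpace eps v varpi psi' theta P)) =
    (\<Sum>d\<in>{d. P d \<and> d \<le> n}. (q * q - 1) * q ^ (d - 1))"
proof -
  interpret vs: vector_space "cscale :: complex \<Rightarrow> (nat \<Rightarrow> ('f \<times> 'f) m2 \<Rightarrow> complex) \<Rightarrow> _"
    by (rule vs_cscale)
  define D where "D = {d. P d \<and> d \<le> n}"
  define I where "I = Sigma D (coset_labels v)"
  define e where "e = (\<lambda>(d, s). basis_vec d s)"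
  define W where "W = fixedVecs eps v (Suc n) (tauSpace eps v varpi psi' theta P)"
  have finD: "finite D" unfolding D_def by (rule finite_subset[of _ "{..n}"]) auto
  have finI: "finite I" unfolding I_def using finD finite_coset_labels by blast
  have Dge: "d \<in> D \<Longrightarrow> d \<ge> 1" for d using Pge by (simp add: D_def)
  have dual: "e i (fst j) (coset_rep eps v (fst j) (snd j)) = (if i = j then 1 else 0)"
    if "i \<in> I" "j \<in> I" for i j
  proof -
    obtain d s d0 s0 where "i = (d, s)" "j = (d0, s0)" by (cases i, cases j)
    then show ?thesis using that basis_vec_dual[of d s d0 s0] Dge by (simp add: I_def e_def)
  qed
  note basis = dual_family_independent[OF finI, of e "\<lambda>j. (fst j, coset_rep eps v (fst j) (snd j))"]
  have "e ` I \<subseteq> W" using basis_vec_fixed Pge by (auto simp: W_def e_def I_def D_def)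
  moreover have "W \<subseteq> vs.span (e ` I)"
  proof
    fix f assume "f \<in> W"
    then have "f = (\<Sum>i\<in>I. cscale (f (fst i) (coset_rep eps v (fst i) (snd i))) (e i))"
      using fixed_vec_expand[OF Pge] by (simp add: W_def I_def D_def e_def split_def)
    also have "\<dots> \<in> vs.span (e ` I)"
      by (intro vs.span_sum vs.span_scale vs.span_base) auto
    finally show "f \<in> vs.span (e ` I)" .
  qed
  moreover have "card (e ` I) = (\<Sum>d\<in>D. (q * q - 1) * q ^ (d - 1))"
  proof -
    have "\<forall>d\<in>D. finite (coset_labels v d)" using finite_coset_labels by blast
    then have "card (e ` I) = (\<Sum>d\<in>D. card (coset_labels v d))"
      using card_image[OF basis(1)] card_SigmaI[OF finD] by (simp add: I_def dual)
    then show ?thesis using card_coset_labels Dge by simp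
  qed
  ultimately have "vs.dim W = (\<Sum>d\<in>D. (q * q - 1) * q ^ (d - 1))"
    using vs.dim_unique basis(2) dual by simp
  then show ?thesis by (simp add: cdim_def W_def D_def)
qed

end

lemma sum_levels_telescope:
  fixes q :: nat
  assumes "q \<ge> 1"
  shows "(\<Sum>i<r. (q * q - 1) * q ^ (2 * i + k)) + q ^ k = q ^ (2 * r + k)"
proof (induction r)
  case (Suc r)
  have "(q * q - 1) * q ^ (2 * r + k) + q ^ (2 * r + k) = q * q * q ^ (2 * r + k)"
    using assms by (simp add: algebra_simps)
  then show ?case using Suc by (simp add: algebra_simps power_add)
qed simp

lemma sum_even_levels:
  fixes q :: nat
  assumes "q \<ge> 1"
  shows "(\<Sum>d\<in>{d. (even d \<and> d > 0) \<and> d \<le> 2 * r}. (q * q - 1) * q ^ (d - 1)) = q * (q ^ (2 * r) - 1)"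
proof -
  have "{d. (even d \<and> d > 0) \<and> d \<le> 2 * r} = (\<lambda>i. 2 * i + 2) ` {..<r}"
  proof (intro equalityI subsetI)
    fix d assume "d \<in> {d. (even d \<and> d > 0) \<and> d \<le> 2 * r}"
    then show "d \<in> (\<lambda>i. 2 * i + 2) ` {..<r}"
      by (intro image_eqI[of _ _ "d div 2 - 1"]) (auto elim!: evenE)
  qed auto
  then have "(\<Sum>d\<in>{d. (even d \<and> d > 0) \<and> d \<le> 2 * r}. (q * q - 1) * q ^ (d - 1))
      = (\<Sum>i<r. (q * q - 1) * q ^ (2 * i + 1))"
    by (simp add: sum.reindex inj_on_def)
  also have "\<dots> = q ^ (2 * r + 1) - q"
    using sum_levels_telescope[OF assms, where r = r and k = 1] by simp
  finally show ?thesis by (simp add: diff_mult_distrib2)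
qed

lemma sum_odd_levels:
  fixes q :: nat
  assumes "q \<ge> 1"
  shows "(\<Sum>d\<in>{d. odd d \<and> d \<le> 2 * r}. (q * q - 1) * q ^ (d - 1)) = q ^ (2 * r) - 1"
proof -
  have "{d. odd d \<and> d \<le> 2 * r} = (\<lambda>i. 2 * i + 1) ` {..<r}"
  proof (intro equalityI subsetI)
    fix d assume "d \<in> {d. odd d \<and> d \<le> 2 * r}"
    then show "d \<in> (\<lambda>i. 2 * i + 1) ` {..<r}"
      by (intro image_eqI[of _ _ "d div 2"]) (auto elim!: oddE)
  qed auto
  then have "(\<Sum>d\<in>{d. odd d \<and> d \<le> 2 * r}. (q * q - 1) * q ^ (d - 1))
      = (\<Sum>i<r. (q * q - 1) * q ^ (2 * i + 0))"
    by (simp add: sum.reindex inj_on_def)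
  also have "\<dots> = q ^ (2 * r) - 1"
    using sum_levels_telescope[OF assms, where r = r and k = 0] by simp
  finally show ?thesis .
qed

theorem lemma7p3:
  fixes v :: "'f::field \<Rightarrow> int" and eps varpi :: 'f
    and psi' :: "'f \<Rightarrow> complex" and theta :: "('f \<times> 'f) m2 \<Rightarrow> complex" and r :: nat
  assumes F: "nonarch_local_field v" and oddchar: "odd_residual_char v"
    and unif: "varpi \<noteq> 0" "v varpi = 1"
    and eps: "eps \<noteq> 0" "v eps = 0" "\<not> (\<exists>x. x * x = eps)"
    and psi_add: "\<forall>x y. psi' (x + y) = psi' x * psi' y"
    and psi_triv: "\<forall>x\<in>pF v 1. psi' x = 1"
    and psi_nontriv: "\<exists>x\<in>OF v. psi' x \<noteq> 1"
    and theta_mult: "\<forall>z\<in>Zgrp eps. \<forall>z'\<in>Zgrp eps. theta (mmul eps z z') = theta z * theta z'"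
    and theta_triv: "\<forall>z\<in>Zgrp eps \<inter> Kn eps v 1. theta z = 1"
  shows "cdim (fixedVecs eps v (2*r+1)
             (tauSpace eps v varpi psi' theta (\<lambda>d. even d \<and> d > 0)))
           = residue_card v * (residue_card v ^ (2*r) - 1)
       \<and> cdim (fixedVecs eps v (2*r+1)
             (tauSpace eps v varpi psi' theta (\<lambda>d. odd d)))
           = residue_card v ^ (2*r) - 1"
proof -
  interpret unitary_setting v varpi eps psi' theta
    using assms by unfold_locales auto
  have "cdim (fixedVecs eps v (2*r+1) (tauSpace eps v varpi psi' theta (\<lambda>d. even d \<and> d > 0)))
      = q * (q ^ (2*r) - 1)"
    using cdim_fixed_tauSpace[of "\<lambda>d. even d \<and> d > 0" "2*r"] sum_even_levels[OF q_ge_1] by simp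
  moreover have "cdim (fixedVecs eps v (2*r+1) (tauSpace eps v varpi psi' theta (\<lambda>d. odd d)))
      = q ^ (2*r) - 1"
    using cdim_fixed_tauSpace[of odd "2*r"] sum_odd_levels[OF q_ge_1] by (simp add: odd_pos Suc_le_eq)
  ultimately show ?thesis by (simp add: q_def)
qed

end
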